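(* Let $q$ be a prime power, let $\Gamma$ be a projective bundle in $\mathrm{PG}(2,q)$, let $A$ be the binary point-line incidence matrix of $\mathrm{PG}(2,q)$ and $B$ the binary point-oval incidence matrix of $\Gamma$ (rows indexed by points in the same order), and let $C=\ker(A\mid B)=\{c\in\mathbb{F}_2^{2(q^2+q+1)} : c(A\mid B)^\top=0\}$, so that the coordinates of $C$ are indexed by the lines of $\mathrm{PG}(2,q)$ followed by the ovals of $\Gamma$. Then the minimum distance of $C$ is $q+2$. Moreover, identifying the support of a codeword with a set of lines and ovals of $\Gamma$, the support of every minimum weight codeword of $C$ is: (i) if $q$ is odd, either an oval of $\Gamma$ together with its $q+1$ tangent lines, or a line together with its $q+1$ tangent ovals of $\Gamma$; (ii) if $q$ is even, either a dual hyperoval, or a hyperoval of ovals of $\Gamma$.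
   Context: $\mathrm{PG}(2,q)$ is the projective plane whose points and lines are the 1- and 2-dimensional subspaces of $\mathbb{F}_q^3$; it has $q^2+q+1$ points and lines. An oval is a set of $q+1$ points such that every line meets it in at most two points. A projective bundle is a collection of $q^2+q+1$ ovals of $\mathrm{PG}(2,q)$ any two of which intersect in exactly one point. A line and an oval are tangent if they meet in exactly one point. A dual hyperoval is a set of $q+2$ lines such that every point lies on zero or two of them. A hyperoval of ovals (of $\Gamma$) is a set of $q+2$ ovals of $\Gamma$ such that every point lies on zero or two of them. The minimum distance is the smallest Hamming weight of a nonzero codeword. *)

theory Defs
  imports "HOL-Analysis.Finite_Cartesian_Product"
begin

text \<open>PG(2,F) for a finite field F (the type 'a), q = CARD('a).\<close>

definition pg_points :: "('a::field ^ 3) set set" where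
  "pg_points = {S. \<exists>v. v \<noteq> 0 \<and> S = {c *s v | c. True}}"

definition pg_lines :: "('a::field ^ 3) set set" where
  "pg_lines = {S. \<exists>u v. (\<forall>a b. a *s u + b *s v = 0 \<longrightarrow> a = 0 \<and> b = 0)
                     \<and> S = {a *s u + b *s v | a b. True}}"

definition meet :: "('a::field ^ 3) set set \<Rightarrow> ('a ^ 3) set \<Rightarrow> nat" where
  "meet X L = card {P \<in> X. P \<subseteq> L}"

definition is_oval :: "('a::{finite,field} ^ 3) set set \<Rightarrow> bool" where
  "is_oval X \<longleftrightarrow> X \<subseteq> pg_points \<and> card X = CARD('a) + 1
     \<and> (\<forall>L \<in> pg_lines. meet X L \<le> 2)"

definition projective_bundle :: "('a::{finite,field} ^ 3) set set set \<Rightarrow> bool" where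
  "projective_bundle \<Gamma> \<longleftrightarrow> (\<forall>X \<in> \<Gamma>. is_oval X)
     \<and> card \<Gamma> = CARD('a)^2 + CARD('a) + 1
     \<and> (\<forall>X1 \<in> \<Gamma>. \<forall>X2 \<in> \<Gamma>. X1 \<noteq> X2 \<longrightarrow> card (X1 \<inter> X2) = 1)"

text \<open>A binary codeword of C = ker(A|B) is identified with its support: a set Ls of lines
  (coordinates indexed by lines) and a set Os of ovals of \<Gamma> (coordinates indexed by ovals).
  c (A|B)^T = 0 over F_2 means: for every point P, the number of support lines through P
  plus the number of support ovals containing P is even.\<close>
definition in_code :: "('a::{finite,field} ^ 3) set set set \<Rightarrow> ('a ^ 3) set set
                        \<Rightarrow> ('a ^ 3) set set set \<Rightarrow> bool" where
  "in_code \<Gamma> Ls Os \<longleftrightarrow> Ls \<subseteq> pg_lines \<and> Os \<subseteq> \<Gamma>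
     \<and> (\<forall>P \<in> pg_points. even (card {L \<in> Ls. P \<subseteq> L} + card {X \<in> Os. P \<in> X}))"

definition weight :: "('a ^ 3) set set \<Rightarrow> ('a ^ 3) set set set \<Rightarrow> nat" where
  "weight Ls Os = card Ls + card Os"

definition tangent :: "('a::field ^ 3) set \<Rightarrow> ('a ^ 3) set set \<Rightarrow> bool" where
  "tangent L X \<longleftrightarrow> meet X L = 1"

definition dual_hyperoval :: "('a::{finite,field} ^ 3) set set \<Rightarrow> bool" where
  "dual_hyperoval Ls \<longleftrightarrow> Ls \<subseteq> pg_lines \<and> card Ls = CARD('a) + 2
     \<and> (\<forall>P \<in> pg_points. card {L \<in> Ls. P \<subseteq> L} = 0 \<or> card {L \<in> Ls. P \<subseteq> L} = 2)"

definition hyperoval_of_ovals :: "('a::{finite,field} ^ 3) set set set \<Rightarrow> ('a ^ 3) set set set \<Rightarrow> bool" where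
  "hyperoval_of_ovals \<Gamma> Os \<longleftrightarrow> Os \<subseteq> \<Gamma> \<and> card Os = CARD('a) + 2
     \<and> (\<forall>P \<in> pg_points. card {X \<in> Os. P \<in> X} = 0 \<or> card {X \<in> Os. P \<in> X} = 2)"

end

theory Submission
  imports Defs "HOL-Analysis.Cartesian_Space"
begin

text \<open>
  The lines of PG(2, q) and the ovals of a projective bundle form two projective planes of order q
  on the same points, each block of one plane being an oval of the other, and a codeword is a set
  of blocks of both kinds covering every point an even number of times.
  If only one kind occurs, counting along a block shows that there are at least q + 2 blocks, with
  equality only for a dual hyperoval, which forces q to be even.
  If both kinds occur, the parity along a block of one plane is the number of its tangents among
  the blocks of the other. As an oval has q + 1 tangents, one at each of its points, and two lines
  have exactly one common tangent oval, weight at most q + 2 then leaves only a line with its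
  tangent ovals or an oval with its tangent lines, and q odd.
  These configurations exist for q odd; for q even the polars of a hyperoval, an oval of the
  bundle together with its nucleus, give a dual hyperoval.
\<close>

lemma sum_card_filter_swap:
  assumes "finite A" "finite B"
  shows "(\<Sum>b\<in>B. card {a\<in>A. R a b}) = (\<Sum>a\<in>A. card {b\<in>B. R a b})"
  using sum.swap_restrict[OF assms(2,1), of "\<lambda>_ _. 1::nat" "\<lambda>b a. R a b"] by simp

lemma sum_card_Int_swap:
  assumes "finite A" "finite B"
  shows "(\<Sum>b\<in>B. card (b \<inter> A)) = (\<Sum>a\<in>A. card {b\<in>B. a \<in> b})"
proof -
  have "b \<inter> A = {a\<in>A. a \<in> b}" for b
    by auto
  then show ?thesis
    using sum_card_filter_swap[OF assms, of "\<lambda>a b. a \<in> b"] by simp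
qed

lemma card_filter_singleton: "card {y\<in>{x}. P y} = (if P x then 1 else 0)"
proof -
  have "{y\<in>{x}. P y} = (if P x then {x} else {})"
    by auto
  then show ?thesis
    by simp
qed

lemma even_sum_iff_even_card_eq_1:
  fixes f :: "'a \<Rightarrow> nat"
  assumes "finite A" and "\<And>a. a \<in> A \<Longrightarrow> f a \<le> 2"
  shows "even (sum f A) \<longleftrightarrow> even (card {a\<in>A. f a = 1})"
proof -
  have "odd (f a) \<longleftrightarrow> f a = 1" if "a \<in> A" for a
    using assms(2)[OF that] by presburger
  then have "{a\<in>A. odd (f a)} = {a\<in>A. f a = 1}"
    by blast
  then show ?thesis
    using even_sum_iff[OF assms(1), of f] by simp
qed

lemma eq_const_if_sum_le:
  fixes f :: "'a \<Rightarrow> nat"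
  assumes "finite A" "\<And>x. x \<in> A \<Longrightarrow> c \<le> f x" "sum f A \<le> c * card A" "x \<in> A"
  shows "f x = c"
proof (rule ccontr)
  assume "f x \<noteq> c"
  with assms(2,4) have "c < f x"
    by force
  with assms have "sum (\<lambda>_. c) A < sum f A"
    by (intro sum_strict_mono_ex1) auto
  with assms(3) show False
    by (simp add: mult.commute)
qed

lemma eq_const_if_sum_ge:
  fixes f :: "'a \<Rightarrow> nat"
  assumes "finite A" "\<And>x. x \<in> A \<Longrightarrow> f x \<le> c" "c * card A \<le> sum f A" "x \<in> A"
  shows "f x = c"
proof (rule ccontr)
  assume "f x \<noteq> c"
  with assms(2,4) have "f x < c"
    by force
  with assms have "sum f A < sum (\<lambda>_. c) A"
    by (intro sum_strict_mono_ex1) auto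
  with assms(3) show False
    by (simp add: mult.commute)
qed

section \<open>Projective planes of order q\<close>

text \<open>The axioms concern the blocks only, which is what the lines of PG(2, q) and a projective
  bundle satisfy directly; the dual axioms are derived below.\<close>

locale projective_plane =
  fixes Pts :: "'p set" and Bl :: "'p set set" and q :: nat
  assumes card_Pts: "card Pts = q * q + q + 1"
    and block_subset: "b \<in> Bl \<Longrightarrow> b \<subseteq> Pts"
    and card_block: "b \<in> Bl \<Longrightarrow> card b = q + 1"
    and card_Bl: "card Bl = q * q + q + 1"
    and card_block_Int: "b \<in> Bl \<Longrightarrow> c \<in> Bl \<Longrightarrow> b \<noteq> c \<Longrightarrow> card (b \<inter> c) = 1"
    and order_ge_2: "2 \<le> q"
begin

definition pencil :: "'p \<Rightarrow> 'p set set" where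
  "pencil P = {b\<in>Bl. P \<in> b}"

lemma finite_Pts: "finite Pts"
  using card_Pts by (intro card_ge_0_finite) simp

lemma finite_Bl: "finite Bl"
  using card_Bl by (intro card_ge_0_finite) simp

lemma finite_block: "b \<in> Bl \<Longrightarrow> finite b"
  using block_subset finite_Pts finite_subset by blast

lemma finite_pencil: "finite (pencil P)"
  unfolding pencil_def using finite_Bl by simp

lemma sum_card_pencil_block:
  assumes "b \<in> Bl"
  shows "(\<Sum>Q\<in>b. card (pencil Q)) = (q + 1) * (q + 1)"
proof -
  have "(\<Sum>Q\<in>b. card (pencil Q)) = (\<Sum>c\<in>Bl. card (c \<inter> b))"
    unfolding pencil_def using sum_card_Int_swap[OF finite_block[OF assms] finite_Bl] by simp
  also have "\<dots> = card (b \<inter> b) + (\<Sum>c\<in>Bl - {b}. card (c \<inter> b))"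
    using assms finite_Bl by (simp add: sum.remove)
  also have "(\<Sum>c\<in>Bl - {b}. card (c \<inter> b)) = (\<Sum>c\<in>Bl - {b}. 1)"
    using assms card_block_Int by (intro sum.cong) auto
  finally show ?thesis
    using assms card_block card_Bl finite_Bl by (simp add: algebra_simps)
qed

lemma sum_card_pencil: "(\<Sum>Q\<in>Pts. card (pencil Q)) = card Pts * (q + 1)"
proof -
  have "(\<Sum>Q\<in>Pts. card (pencil Q)) = (\<Sum>b\<in>Bl. card (b \<inter> Pts))"
    unfolding pencil_def using sum_card_Int_swap[OF finite_Pts finite_Bl] by simp
  also have "\<dots> = (\<Sum>b\<in>Bl. q + 1)"
    using block_subset card_block by (intro sum.cong) (auto simp: Int_absorb2)
  finally show ?thesis
    using card_Bl card_Pts by simp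
qed

lemma sum_card_pencil_squared:
  "(\<Sum>Q\<in>Pts. card (pencil Q) * card (pencil Q)) = card Pts * ((q + 1) * (q + 1))"
proof -
  have "(\<Sum>Q\<in>Pts. card (pencil Q) * card (pencil Q)) = (\<Sum>Q\<in>Pts. \<Sum>b\<in>{b\<in>Bl. Q \<in> b}. card (pencil Q))"
    by (simp add: pencil_def)
  also have "\<dots> = (\<Sum>b\<in>Bl. \<Sum>Q\<in>{Q\<in>Pts. Q \<in> b}. card (pencil Q))"
    by (rule sum.swap_restrict[OF finite_Pts finite_Bl])
  also have "\<dots> = (\<Sum>b\<in>Bl. (q + 1) * (q + 1))"
  proof (rule sum.cong[OF refl])
    fix b assume "b \<in> Bl"
    then have "{Q\<in>Pts. Q \<in> b} = b"
      using block_subset by auto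
    then show "(\<Sum>Q\<in>{Q\<in>Pts. Q \<in> b}. card (pencil Q)) = (q + 1) * (q + 1)"
      using sum_card_pencil_block[OF \<open>b \<in> Bl\<close>] by simp
  qed
  finally show ?thesis
    using card_Bl card_Pts by simp
qed

text \<open>The pencil sizes have the mean and mean square of the constant q + 1, so their variance
  vanishes.\<close>

lemma card_pencil:
  assumes "P \<in> Pts"
  shows "card (pencil P) = q + 1"
proof -
  define r where "r Q = card (pencil Q)" for Q
  define c :: int where "c = int q + 1"
  have "(\<Sum>Q\<in>Pts. (int (r Q) - c)\<^sup>2) = (\<Sum>Q\<in>Pts. int (r Q * r Q) - 2 * c * int (r Q) + c * c)"
    by (intro sum.cong) (simp_all add: power2_eq_square algebra_simps)
  also have "\<dots> = int (\<Sum>Q\<in>Pts. r Q * r Q) - 2 * c * int (\<Sum>Q\<in>Pts. r Q) + int (card Pts) * c * c"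
    by (simp add: sum.distrib sum_subtractf sum_distrib_left of_nat_sum)
  also have "\<dots> = 0"
    unfolding r_def sum_card_pencil sum_card_pencil_squared c_def by (simp add: algebra_simps)
  finally have "(int (r P) - c)\<^sup>2 = 0"
    using assms finite_Pts by (subst (asm) sum_nonneg_eq_0_iff) auto
  then show ?thesis
    unfolding r_def c_def by simp
qed

lemma card_pencil_Int_le:
  assumes "P \<noteq> Q"
  shows "card (pencil P \<inter> pencil Q) \<le> 1"
proof -
  have "b = c" if "b \<in> Bl" "c \<in> Bl" "{P, Q} \<subseteq> b \<inter> c" for b c
  proof (rule ccontr)
    assume "b \<noteq> c"
    have "card {P, Q} \<le> card (b \<inter> c)"
      using that finite_block by (intro card_mono) auto
    with assms card_block_Int[OF that(1,2) \<open>b \<noteq> c\<close>] show False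
      by simp
  qed
  then show ?thesis
    using finite_pencil by (auto simp: card_le_Suc0_iff_eq pencil_def)
qed

lemma card_pencil_Int:
  assumes "P \<in> Pts" "Q \<in> Pts" "P \<noteq> Q"
  shows "card (pencil P \<inter> pencil Q) = 1"
proof -
  have "pencil P \<inter> pencil R = {b\<in>pencil P. R \<in> b}" for R
    by (auto simp: pencil_def)
  then have "(\<Sum>R\<in>Pts - {P}. card (pencil P \<inter> pencil R)) = (\<Sum>b\<in>pencil P. card (b \<inter> (Pts - {P})))"
    using sum_card_Int_swap[of "Pts - {P}" "pencil P"] finite_Pts finite_pencil by simp
  also have "\<dots> = (\<Sum>b\<in>pencil P. q)"
  proof (rule sum.cong[OF refl])
    fix b assume "b \<in> pencil P"
    then have "b \<in> Bl" "P \<in> b" "b \<inter> (Pts - {P}) = b - {P}"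
      using block_subset by (auto simp: pencil_def)
    then show "card (b \<inter> (Pts - {P})) = q"
      using card_block finite_block by simp
  qed
  also have "\<dots> = 1 * card (Pts - {P})"
    using card_pencil assms(1) card_Pts finite_Pts by simp
  finally have "1 * card (Pts - {P}) \<le> (\<Sum>R\<in>Pts - {P}. card (pencil P \<inter> pencil R))"
    by simp
  then show ?thesis
    using assms finite_Pts card_pencil_Int_le
    by (intro eq_const_if_sum_ge[of "Pts - {P}" "\<lambda>R. card (pencil P \<inter> pencil R)"]) auto
qed

lemma sum_card_Int_pencil:
  assumes "K \<subseteq> Pts" "P \<in> Pts"
  shows "(\<Sum>b\<in>pencil P. card (b \<inter> K)) = card K + (if P \<in> K then q else 0)"
proof -
  have finK: "finite K"
    using assms(1) finite_Pts finite_subset by blast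
  have "pencil P \<inter> pencil R = {b\<in>pencil P. R \<in> b}" for R
    by (auto simp: pencil_def)
  then have "(\<Sum>b\<in>pencil P. card (b \<inter> K)) = (\<Sum>R\<in>K. card (pencil P \<inter> pencil R))"
    using sum_card_Int_swap[OF finK finite_pencil] by simp
  also have "\<dots> = (\<Sum>R\<in>K. 1 + (if R = P then q else 0))"
  proof (rule sum.cong[OF refl])
    fix R assume "R \<in> K"
    then show "card (pencil P \<inter> pencil R) = 1 + (if R = P then q else 0)"
      using assms card_pencil card_pencil_Int by auto
  qed
  also have "\<dots> = card K + (\<Sum>R\<in>K. if R = P then q else 0)"
    by (subst sum.distrib) simp
  also have "\<dots> = card K + (if P \<in> K then q else 0)"
    using finK by simp
  finally show ?thesis .
qed

lemma sum_card_blocks_containing: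
  assumes "Ls \<subseteq> Bl" "M \<in> Bl"
  shows "(\<Sum>P\<in>M. card {L\<in>Ls. P \<in> L}) = card Ls + (if M \<in> Ls then q else 0)"
proof -
  have finLs: "finite Ls"
    using assms(1) finite_Bl finite_subset by blast
  have "(\<Sum>P\<in>M. card {L\<in>Ls. P \<in> L}) = (\<Sum>L\<in>Ls. card (L \<inter> M))"
    using sum_card_Int_swap[OF finite_block[OF assms(2)] finLs] by simp
  also have "\<dots> = (\<Sum>L\<in>Ls. 1 + (if L = M then q else 0))"
    using assms card_block card_block_Int by (intro sum.cong) auto
  also have "\<dots> = card Ls + (\<Sum>L\<in>Ls. if L = M then q else 0)"
    by (subst sum.distrib) simp
  also have "\<dots> = card Ls + (if M \<in> Ls then q else 0)"
    using finLs by simp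
  finally show ?thesis .
qed

lemma Int_pencil: "A \<subseteq> Bl \<Longrightarrow> A \<inter> pencil P = {b\<in>A. P \<in> b}"
  by (auto simp: pencil_def)

subsection \<open>Ovals\<close>

definition oval :: "'p set \<Rightarrow> bool" where
  "oval K \<longleftrightarrow> K \<subseteq> Pts \<and> card K = q + 1 \<and> (\<forall>b\<in>Bl. card (b \<inter> K) \<le> 2)"

definition tangents :: "'p set \<Rightarrow> 'p set set" where
  "tangents K = {b\<in>Bl. card (b \<inter> K) = 1}"

lemma tangents_subset: "tangents K \<subseteq> Bl"
  by (auto simp: tangents_def)

lemma finite_tangents: "finite (tangents K)"
  using tangents_subset finite_Bl finite_subset by blast

context
  fixes K assumes oval: "oval K"
begin

lemma oval_subset: "K \<subseteq> Pts"
  and card_oval: "card K = q + 1"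
  and card_block_Int_oval: "b \<in> Bl \<Longrightarrow> card (b \<inter> K) \<le> 2"
  using oval unfolding oval_def by auto

lemma finite_oval: "finite K"
  using oval_subset finite_Pts finite_subset by blast

lemma card_tangents_at:
  assumes "P \<in> K"
  shows "card (tangents K \<inter> pencil P) = 1"
proof -
  have P: "P \<in> Pts"
    using assms oval_subset by auto
  have secant_or_tangent: "card (b \<inter> K) = (if b \<in> tangents K then 1 else 2)" if "b \<in> pencil P" for b
  proof -
    have "P \<in> b \<inter> K" "b \<in> Bl"
      using that assms by (auto simp: pencil_def)
    then have "card (b \<inter> K) \<noteq> 0"
      using finite_oval by auto
    then show ?thesis
      using card_block_Int_oval[OF \<open>b \<in> Bl\<close>] \<open>b \<in> Bl\<close> by (auto simp: tangents_def)
  qed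
  let ?t = "card (tangents K \<inter> pencil P)"
  have "2 * q + 1 = (\<Sum>b\<in>pencil P. card (b \<inter> K))"
    using sum_card_Int_pencil[OF oval_subset P] assms card_oval by simp
  also have "\<dots> = (\<Sum>b\<in>pencil P. if b \<in> tangents K then 1 else 2)"
    using secant_or_tangent by (rule sum.cong[OF refl])
  also have "\<dots> = ?t + 2 * card (pencil P - tangents K)"
    using finite_pencil by (simp add: sum.If_cases Diff_eq Int_commute)
  also have "card (pencil P - tangents K) = q + 1 - ?t"
    using card_pencil[OF P] finite_pencil by (simp add: card_Diff_subset_Int Int_commute)
  finally have "2 * q + 1 = ?t + 2 * (q + 1 - ?t)" .
  moreover have "?t \<le> q + 1"
    using card_pencil[OF P] finite_pencil card_mono[of "pencil P" "tangents K \<inter> pencil P"] by auto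
  ultimately show ?thesis
    by linarith
qed

lemma card_tangents: "card (tangents K) = q + 1"
proof -
  have "card (tangents K) = (\<Sum>b\<in>tangents K. card (b \<inter> K))"
    by (simp add: tangents_def)
  also have "\<dots> = (\<Sum>P\<in>K. card (tangents K \<inter> pencil P))"
    unfolding Int_pencil[OF tangents_subset] by (rule sum_card_Int_swap[OF finite_oval finite_tangents])
  also have "\<dots> = (\<Sum>P\<in>K. 1)"
    using card_tangents_at by (rule sum.cong[OF refl])
  finally show ?thesis
    using card_oval by simp
qed

lemma even_card_tangents_through_iff:
  assumes "P \<in> Pts - K"
  shows "even (card (tangents K \<inter> pencil P)) \<longleftrightarrow> odd q"
proof -
  have "even (\<Sum>b\<in>pencil P. card (b \<inter> K)) \<longleftrightarrow> even (card {b\<in>pencil P. card (b \<inter> K) = 1})"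
    using finite_pencil card_block_Int_oval
    by (intro even_sum_iff_even_card_eq_1) (auto simp: pencil_def)
  moreover have "{b\<in>pencil P. card (b \<inter> K) = 1} = tangents K \<inter> pencil P"
    by (auto simp: pencil_def tangents_def)
  ultimately show ?thesis
    using sum_card_Int_pencil[OF oval_subset] assms card_oval by auto
qed

text \<open>The q + 1 tangents meet the secant s in q + 1 points counted with multiplicity, two of which
  lie on K. For q even each of the q - 1 points of s off K lies on an odd number of tangents,
  hence on exactly one.\<close>

lemma card_tangents_through_secant_point:
  assumes "even q" "s \<in> Bl" "card (s \<inter> K) = 2" "R \<in> s - K"
  shows "card (tangents K \<inter> pencil R) = 1"
proof -
  define t where "t Q = card (tangents K \<inter> pencil Q)" for Q
  have "(\<Sum>Q\<in>s. t Q) = (\<Sum>b\<in>tangents K. card (b \<inter> s))"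
    unfolding t_def Int_pencil[OF tangents_subset]
    by (rule sum_card_Int_swap[OF finite_block[OF assms(2)] finite_tangents, symmetric])
  also have "\<dots> = (\<Sum>b\<in>tangents K. 1)"
  proof (rule sum.cong[OF refl])
    fix b assume "b \<in> tangents K"
    then have "b \<in> Bl" "b \<noteq> s"
      using assms(3) by (auto simp: tangents_def)
    then show "card (b \<inter> s) = 1"
      using card_block_Int assms(2) by blast
  qed
  finally have sum_s: "(\<Sum>Q\<in>s. t Q) = q + 1"
    using card_tangents by simp
  have "(\<Sum>Q\<in>s \<inter> K. t Q) = (\<Sum>Q\<in>s \<inter> K. 1)"
    unfolding t_def using card_tangents_at by (intro sum.cong) auto
  then have sum_sK: "(\<Sum>Q\<in>s \<inter> K. t Q) = 2"
    using assms(3) by simp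
  have "(\<Sum>Q\<in>s. t Q) = (\<Sum>Q\<in>s \<inter> K. t Q) + (\<Sum>Q\<in>s - K. t Q)"
    using finite_block[OF assms(2)] by (rule sum.Int_Diff)
  moreover have "card (s - K) = q - 1"
    using card_block[OF assms(2)] assms(3) finite_oval by (simp add: card_Diff_subset_Int)
  ultimately have sum_le: "(\<Sum>Q\<in>s - K. t Q) \<le> 1 * card (s - K)"
    using sum_s sum_sK by simp
  have ge_1: "1 \<le> t Q" if "Q \<in> s - K" for Q
  proof -
    have "Q \<in> Pts - K"
      using that block_subset[OF assms(2)] by auto
    then have "odd (t Q)"
      unfolding t_def using even_card_tangents_through_iff assms(1) by blast
    then show ?thesis
      by (cases "t Q") auto
  qed
  have "finite (s - K)"
    using finite_block[OF assms(2)] by simp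
  from eq_const_if_sum_le[OF this ge_1 sum_le assms(4)] show ?thesis
    unfolding t_def .
qed

lemma ex_point_off_secants:
  assumes "even q"
  shows "\<exists>N\<in>Pts - K. \<forall>s\<in>pencil N. card (s \<inter> K) \<noteq> 2"
proof (rule ccontr)
  assume no_such_point: "\<not> ?thesis"
  define t where "t Q = card (tangents K \<inter> pencil Q)" for Q
  have "(\<Sum>Q\<in>Pts - K. t Q) = (\<Sum>b\<in>tangents K. card (b \<inter> (Pts - K)))"
    unfolding t_def Int_pencil[OF tangents_subset] using finite_Pts finite_tangents
    by (intro sum_card_Int_swap[symmetric]) auto
  also have "\<dots> = (\<Sum>b\<in>tangents K. q)"
  proof (rule sum.cong[OF refl])
    fix b assume "b \<in> tangents K"
    then have "b \<in> Bl" "card (b \<inter> K) = 1" "b \<inter> (Pts - K) = b - K"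
      using block_subset by (auto simp: tangents_def)
    then show "card (b \<inter> (Pts - K)) = q"
      using card_block finite_oval by (simp add: card_Diff_subset_Int)
  qed
  finally have "(\<Sum>Q\<in>Pts - K. t Q) = (q + 1) * q"
    using card_tangents by simp
  moreover have "t Q = 1" if Q: "Q \<in> Pts - K" for Q
  proof -
    obtain s where "s \<in> pencil Q" "card (s \<inter> K) = 2"
      using no_such_point Q by blast
    then have "s \<in> Bl" "card (s \<inter> K) = 2" "Q \<in> s - K"
      using Q by (auto simp: pencil_def)
    then show ?thesis
      unfolding t_def by (rule card_tangents_through_secant_point[OF assms])
  qed
  then have "(\<Sum>Q\<in>Pts - K. t Q) = card (Pts - K)"
    by simp
  moreover have "card (Pts - K) = q * q"
    using card_Pts card_oval finite_oval oval_subset by (simp add: card_Diff_subset)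
  ultimately show False
    using order_ge_2 by simp
qed

lemma nucleus:
  assumes "even q"
  obtains N where "N \<in> Pts - K" "pencil N = tangents K"
proof -
  obtain N where N: "N \<in> Pts - K" "\<forall>s\<in>pencil N. card (s \<inter> K) \<noteq> 2"
    using ex_point_off_secants[OF assms] by blast
  have le_1: "card (b \<inter> K) \<le> 1" if "b \<in> pencil N" for b
    using N(2) that card_block_Int_oval[of b] by (force simp: pencil_def)
  have sum_ge: "1 * card (pencil N) \<le> (\<Sum>b\<in>pencil N. card (b \<inter> K))"
    using sum_card_Int_pencil[OF oval_subset, of N] N(1) card_oval card_pencil by simp
  have "card (b \<inter> K) = 1" if "b \<in> pencil N" for b
    using eq_const_if_sum_ge[where f = "\<lambda>b. card (b \<inter> K)", OF finite_pencil le_1 sum_ge that] .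
  then have "pencil N \<subseteq> tangents K"
    by (auto simp: pencil_def tangents_def)
  moreover have "card (pencil N) = card (tangents K)"
    using card_pencil card_tangents N(1) by simp
  ultimately have "pencil N = tangents K"
    using finite_tangents by (simp add: card_subset_eq)
  with N(1) show thesis
    by (rule that)
qed

lemma ex_hyperoval:
  assumes "even q"
  shows "\<exists>H\<subseteq>Pts. card H = q + 2 \<and> (\<forall>b\<in>Bl. card (b \<inter> H) = 0 \<or> card (b \<inter> H) = 2)"
proof -
  obtain N where N: "N \<in> Pts - K" "pencil N = tangents K"
    using nucleus[OF assms] .
  have N_iff: "N \<in> b \<longleftrightarrow> card (b \<inter> K) = 1" if "b \<in> Bl" for b
    using N(2) that unfolding pencil_def tangents_def by blast
  have "card (b \<inter> insert N K) = 0 \<or> card (b \<inter> insert N K) = 2" if "b \<in> Bl" for b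
  proof (cases "N \<in> b")
    case True
    then have "b \<inter> insert N K = insert N (b \<inter> K)"
      by auto
    then show ?thesis
      using True N(1) N_iff[OF that] finite_oval by simp
  next
    case False
    then have "b \<inter> insert N K = b \<inter> K"
      by auto
    then show ?thesis
      using False N_iff[OF that] card_block_Int_oval[OF that] by auto
  qed
  moreover have "card (insert N K) = q + 2"
    using N(1) finite_oval card_oval by simp
  ultimately show ?thesis
    using N(1) oval_subset by (intro exI[of _ "insert N K"]) auto
qed

end

subsection \<open>Sets of blocks covering every point evenly\<close>

context
  fixes Ls
  assumes Ls_subset: "Ls \<subseteq> Bl" and Ls_nonempty: "Ls \<noteq> {}"
    and even_degree: "\<forall>P\<in>Pts. even (card {L\<in>Ls. P \<in> L})"
    and card_Ls_le: "card Ls \<le> q + 2"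
begin

lemma finite_even_block_set: "finite Ls"
  using Ls_subset finite_Bl by (rule finite_subset)

lemma two_le_degree:
  assumes "L \<in> Ls" "P \<in> L"
  shows "2 \<le> card {L'\<in>Ls. P \<in> L'}"
proof -
  have "card {L'\<in>Ls. P \<in> L'} \<noteq> 0"
    using assms finite_even_block_set by auto
  moreover have "even (card {L'\<in>Ls. P \<in> L'})"
    using even_degree assms Ls_subset block_subset by blast
  ultimately show ?thesis
    by presburger
qed

lemma sum_degree_on_block:
  assumes "L \<in> Ls"
  shows "(\<Sum>P\<in>L. card {L'\<in>Ls. P \<in> L'}) = card Ls + q"
  using sum_card_blocks_containing[OF Ls_subset] assms Ls_subset by auto

lemma card_even_block_set: "card Ls = q + 2"
proof -
  obtain L0 where L0: "L0 \<in> Ls"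
    using Ls_nonempty by blast
  have "2 * card L0 \<le> (\<Sum>P\<in>L0. card {L'\<in>Ls. P \<in> L'})"
    using sum_mono[of L0 "\<lambda>_. 2" "\<lambda>P. card {L'\<in>Ls. P \<in> L'}"] two_le_degree[OF L0] by simp
  then have "2 * (q + 1) \<le> card Ls + q"
    using sum_degree_on_block[OF L0] card_block L0 Ls_subset by auto
  with card_Ls_le show ?thesis
    by simp
qed

lemma degree_even_block_set:
  assumes "P \<in> Pts"
  shows "card {L\<in>Ls. P \<in> L} = 0 \<or> card {L\<in>Ls. P \<in> L} = 2"
proof (cases "\<exists>L\<in>Ls. P \<in> L")
  case True
  then obtain L where L: "L \<in> Ls" "P \<in> L"
    by blast
  then have "L \<in> Bl"
    using Ls_subset by blast
  have "(\<Sum>P\<in>L. card {L'\<in>Ls. P \<in> L'}) \<le> 2 * card L"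
    using sum_degree_on_block[OF L(1)] card_even_block_set card_block[OF \<open>L \<in> Bl\<close>] by simp
  from eq_const_if_sum_le[OF finite_block[OF \<open>L \<in> Bl\<close>] two_le_degree[OF L(1)] this L(2)]
  show ?thesis
    by simp
next
  case False
  then show ?thesis
    by (auto simp: card_eq_0_iff)
qed

lemma even_order_if_even_block_set: "even q"
proof -
  have "\<not> Bl \<subseteq> Ls"
  proof
    assume "Bl \<subseteq> Ls"
    then have "card Bl \<le> q + 2"
      using card_mono[OF finite_even_block_set] card_even_block_set by metis
    moreover have "2 * 2 \<le> q * q"
      using order_ge_2 mult_le_mono by blast
    ultimately show False
      using card_Bl by simp
  qed
  then obtain M where M: "M \<in> Bl" "M \<notin> Ls"
    by blast
  have "even (\<Sum>P\<in>M. card {L\<in>Ls. P \<in> L})"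
    using even_degree block_subset[OF M(1)] by (intro dvd_sum) auto
  then show "even q"
    using sum_card_blocks_containing[OF Ls_subset M(1)] M(2) card_even_block_set by simp
qed

end

end

section \<open>Two planes on the same points\<close>

text \<open>The support of a word of the binary code with check matrix (A1 | A2), where Ai is the
  point-block incidence matrix of Bi.\<close>

definition codeword :: "'p set \<Rightarrow> 'p set set \<Rightarrow> 'p set set \<Rightarrow> 'p set set \<Rightarrow> 'p set set \<Rightarrow> bool" where
  "codeword Pts B1 B2 Ls Os \<longleftrightarrow> Ls \<subseteq> B1 \<and> Os \<subseteq> B2 \<and>
     (\<forall>P\<in>Pts. even (card {L\<in>Ls. P \<in> L} + card {X\<in>Os. P \<in> X}))"

lemma codeword_swap: "codeword Pts B1 B2 Ls Os \<longleftrightarrow> codeword Pts B2 B1 Os Ls"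
  unfolding codeword_def by (auto simp: add.commute)

locale compatible_planes = p1: projective_plane Pts B1 q + p2: projective_plane Pts B2 q
  for Pts :: "'p set" and B1 B2 :: "'p set set" and q :: nat +
  assumes card_Int_le_2: "b \<in> B1 \<Longrightarrow> c \<in> B2 \<Longrightarrow> card (b \<inter> c) \<le> 2"
begin

lemma card_Int_le_2': "c \<in> B2 \<Longrightarrow> b \<in> B1 \<Longrightarrow> card (c \<inter> b) \<le> 2"
  using card_Int_le_2 by (simp add: Int_commute)

lemma swapped: "compatible_planes Pts B2 B1 q"
  using p1.projective_plane_axioms p2.projective_plane_axioms card_Int_le_2'
  by (simp add: compatible_planes_def compatible_planes_axioms_def)

lemma codewordD:
  assumes "codeword Pts B1 B2 Ls Os"
  shows "Ls \<subseteq> B1" "Os \<subseteq> B2" "finite Ls" "finite Os"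
  using assms p1.finite_Bl p2.finite_Bl finite_subset unfolding codeword_def by blast+

lemma oval_B2_block: "X \<in> B2 \<Longrightarrow> p1.oval X"
  using p2.block_subset p2.card_block card_Int_le_2 by (simp add: p1.oval_def)

lemma oval_B1_block: "L \<in> B1 \<Longrightarrow> p2.oval L"
  using p1.block_subset p1.card_block card_Int_le_2' by (simp add: p2.oval_def)

lemma mem_tangents_swap: "L \<in> B1 \<Longrightarrow> X \<in> B2 \<Longrightarrow> L \<in> p1.tangents X \<longleftrightarrow> X \<in> p2.tangents L"
  by (simp add: p1.tangents_def p2.tangents_def Int_commute)

lemma parity_on_B1_block:
  assumes cw: "codeword Pts B1 B2 Ls Os" and M: "M \<in> B1"
  shows "even (card Ls + (if M \<in> Ls then q else 0) + card (Os \<inter> p2.tangents M))"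
proof -
  have Ls: "Ls \<subseteq> B1" and Os: "Os \<subseteq> B2" and finOs: "finite Os"
    using codewordD[OF cw] by auto
  have "even (\<Sum>P\<in>M. card {L\<in>Ls. P \<in> L} + card {X\<in>Os. P \<in> X})"
    using cw p1.block_subset[OF M] unfolding codeword_def by (intro dvd_sum) auto
  moreover have "(\<Sum>P\<in>M. card {X\<in>Os. P \<in> X}) = (\<Sum>X\<in>Os. card (X \<inter> M))"
    using sum_card_Int_swap[OF p1.finite_block[OF M] finOs] by simp
  moreover have "even (\<Sum>X\<in>Os. card (X \<inter> M)) \<longleftrightarrow> even (card (Os \<inter> p2.tangents M))"
  proof -
    have "{X\<in>Os. card (X \<inter> M) = 1} = Os \<inter> p2.tangents M"
      using Os by (auto simp: p2.tangents_def)
    moreover have "card (X \<inter> M) \<le> 2" if "X \<in> Os" for X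
      using card_Int_le_2'[of X M] M Os that by blast
    ultimately show ?thesis
      using even_sum_iff_even_card_eq_1[OF finOs, of "\<lambda>X. card (X \<inter> M)"] by simp
  qed
  ultimately show ?thesis
    using p1.sum_card_blocks_containing[OF Ls M] by (simp add: sum.distrib)
qed

lemma parity_on_B2_block:
  assumes "codeword Pts B1 B2 Ls Os" "Y \<in> B2"
  shows "even (card Os + (if Y \<in> Os then q else 0) + card (Ls \<inter> p1.tangents Y))"
  using compatible_planes.parity_on_B1_block[OF swapped] assms codeword_swap by blast

text \<open>The point of L1 on L lies on one tangent of L, each of the q other points of L1 on a number
  of tangents of the parity of q + 1.\<close>

lemma odd_sum_card_tangents_Int:
  assumes L1: "L1 \<in> B1" and L: "L \<in> B1" "L \<noteq> L1"
  shows "odd (\<Sum>Y\<in>p2.tangents L. card (Y \<inter> L1))"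
proof -
  have oval: "p2.oval L"
    using oval_B1_block[OF L(1)] .
  have finL1: "finite L1"
    using p1.finite_block[OF L1] .
  obtain P0 where P0: "L1 \<inter> L = {P0}"
    using p1.card_block_Int[OF L1 L(1) L(2)[symmetric]] by (rule card_1_singletonE)
  then have P0_L1: "P0 \<in> L1"
    by auto
  define g where "g P = card (p2.tangents L \<inter> p2.pencil P)" for P
  have "(\<Sum>Y\<in>p2.tangents L. card (Y \<inter> L1)) = (\<Sum>P\<in>L1. g P)"
    unfolding g_def p2.Int_pencil[OF p2.tangents_subset]
    by (rule sum_card_Int_swap[OF finL1 p2.finite_tangents])
  also have "\<dots> = g P0 + (\<Sum>P\<in>L1 - {P0}. g P)"
    by (rule sum.remove[OF finL1 P0_L1])
  also have "g P0 = 1"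
    using P0 p2.card_tangents_at[OF oval] unfolding g_def by auto
  finally have sum_eq: "(\<Sum>Y\<in>p2.tangents L. card (Y \<inter> L1)) = 1 + (\<Sum>P\<in>L1 - {P0}. g P)" .
  have "even (g P + (q + 1))" if "P \<in> L1 - {P0}" for P
  proof -
    have "P \<in> Pts - L"
      using that P0 p1.block_subset[OF L1] by auto
    then show ?thesis
      using p2.even_card_tangents_through_iff[OF oval] unfolding g_def by auto
  qed
  then have "even (\<Sum>P\<in>L1 - {P0}. g P + (q + 1))"
    by (intro dvd_sum) auto
  moreover have "(\<Sum>P\<in>L1 - {P0}. g P + (q + 1)) = (\<Sum>P\<in>L1 - {P0}. g P) + q * (q + 1)"
    using P0_L1 p1.card_block[OF L1] finL1 by (subst sum.distrib) (simp add: card_Diff_singleton)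
  ultimately show ?thesis
    using sum_eq by simp
qed

lemma odd_card_common_tangents:
  assumes L1: "L1 \<in> B1" and L: "L \<in> B1" "L \<noteq> L1"
  shows "odd (card (p2.tangents L1 \<inter> p2.tangents L))"
proof -
  have "card (Y \<inter> L1) \<le> 2" if "Y \<in> p2.tangents L" for Y
    using card_Int_le_2'[of Y L1] L1 p2.tangents_subset that by blast
  then have "even (\<Sum>Y\<in>p2.tangents L. card (Y \<inter> L1))
      \<longleftrightarrow> even (card {Y\<in>p2.tangents L. card (Y \<inter> L1) = 1})"
    by (rule even_sum_iff_even_card_eq_1[OF p2.finite_tangents])
  moreover have "{Y\<in>p2.tangents L. card (Y \<inter> L1) = 1} = p2.tangents L1 \<inter> p2.tangents L"
    by (auto simp: p2.tangents_def)
  ultimately show ?thesis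
    using odd_sum_card_tangents_Int[OF assms] by simp
qed

text \<open>Each of the q + 1 tangents of L1 is a tangent of q further lines, so the odd numbers of common
  tangents of L1 and the q * q + q other lines add up to their count.\<close>

lemma card_common_tangents:
  assumes L1: "L1 \<in> B1" and L2: "L2 \<in> B1" "L1 \<noteq> L2"
  shows "card (p2.tangents L1 \<inter> p2.tangents L2) = 1"
proof -
  let ?A = "B1 - {L1}"
  let ?c = "\<lambda>L. card (p2.tangents L1 \<inter> p2.tangents L)"
  have "p2.tangents L1 \<inter> p2.tangents L = {Y\<in>p2.tangents L1. Y \<in> p2.tangents L}" for L
    by blast
  then have "(\<Sum>L\<in>?A. ?c L) = (\<Sum>Y\<in>p2.tangents L1. card {L\<in>?A. Y \<in> p2.tangents L})"
    using sum_card_filter_swap[OF p2.finite_tangents, of ?A] p1.finite_Bl by simp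
  also have "\<dots> = (\<Sum>Y\<in>p2.tangents L1. q)"
  proof (rule sum.cong[OF refl])
    fix Y assume Y: "Y \<in> p2.tangents L1"
    then have "Y \<in> B2"
      using p2.tangents_subset by blast
    then have "{L\<in>?A. Y \<in> p2.tangents L} = p1.tangents Y - {L1}"
      using mem_tangents_swap p1.tangents_subset by blast
    moreover have "L1 \<in> p1.tangents Y"
      using mem_tangents_swap[OF L1 \<open>Y \<in> B2\<close>] Y by blast
    ultimately show "card {L\<in>?A. Y \<in> p2.tangents L} = q"
      using p1.card_tangents[OF oval_B2_block[OF \<open>Y \<in> B2\<close>]] p1.finite_tangents by simp
  qed
  also have "\<dots> = 1 * card ?A"
    using p2.card_tangents[OF oval_B1_block[OF L1]] p1.card_Bl L1 p1.finite_Bl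
    by (simp add: card_Diff_singleton)
  finally have "(\<Sum>L\<in>?A. ?c L) \<le> 1 * card ?A"
    by simp
  moreover have "1 \<le> ?c L" if "L \<in> ?A" for L
    using odd_card_common_tangents[OF L1, of L] that by (cases "?c L") auto
  ultimately show ?thesis
    using eq_const_if_sum_le[where A = ?A and f = ?c and c = 1 and x = L2] p1.finite_Bl L2 by simp
qed

text \<open>By parity every block of B1 outside Ls is tangent to a member of Os, which is impossible for
  |Ls| \<ge> 3 as there are too few tangents.\<close>

lemma card_eq_1_if_odd:
  assumes cw: "codeword Pts B1 B2 Ls Os" and "Os \<noteq> {}"
    and weight: "card Ls + card Os \<le> q + 2" and odd: "odd (card Ls)"
  shows "card Ls = 1"
proof (rule ccontr)
  assume "card Ls \<noteq> 1"
  with odd have ge_3: "3 \<le> card Ls"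
    by presburger
  have Ls: "Ls \<subseteq> B1" "finite Ls" and Os: "Os \<subseteq> B2" "finite Os"
    using codewordD[OF cw] by auto
  have "B1 - Ls \<subseteq> (\<Union>X\<in>Os. p1.tangents X)"
  proof
    fix M assume M: "M \<in> B1 - Ls"
    then have "odd (card (Os \<inter> p2.tangents M))"
      using parity_on_B1_block[OF cw, of M] odd by auto
    then have "Os \<inter> p2.tangents M \<noteq> {}"
      by auto
    then obtain X where "X \<in> Os" "X \<in> p2.tangents M"
      by blast
    then show "M \<in> (\<Union>X\<in>Os. p1.tangents X)"
      using M Os mem_tangents_swap by blast
  qed
  then have "card (B1 - Ls) \<le> card (\<Union>X\<in>Os. p1.tangents X)"
    using Os p1.finite_tangents by (intro card_mono) auto
  also have "\<dots> \<le> (\<Sum>X\<in>Os. card (p1.tangents X))"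
    using Os(2) by (rule card_UN_le)
  also have "\<dots> = card Os * (q + 1)"
    using Os p1.card_tangents[OF oval_B2_block] by (simp add: subset_iff)
  finally have "q * q + q + 1 - card Ls \<le> card Os * (q + 1)"
    using card_Diff_subset[OF Ls(2,1)] p1.card_Bl by simp
  moreover have "(card Os + 1) * (q + 1) \<le> q * (q + 1)"
    using weight ge_3 by (intro mult_le_mono1) simp
  moreover have "1 \<le> card Os"
    using \<open>Os \<noteq> {}\<close> Os(2) by (simp add: Suc_le_eq card_gt_0_iff)
  ultimately show False
    using weight by (simp add: algebra_simps)
qed

lemma not_codeword_singletons: "\<not> codeword Pts B1 B2 {L} {X}"
proof
  assume cw: "codeword Pts B1 B2 {L} {X}"
  then have L: "L \<in> B1" and X: "X \<in> B2"
    by (auto simp: codeword_def)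
  have "L \<subseteq> X"
  proof
    fix P assume "P \<in> L"
    moreover have "P \<in> Pts"
      using \<open>P \<in> L\<close> p1.block_subset[OF L] by blast
    then have "even (card {L'\<in>{L}. P \<in> L'} + card {Y\<in>{X}. P \<in> Y})"
      using cw unfolding codeword_def by blast
    ultimately show "P \<in> X"
      unfolding card_filter_singleton by (cases "P \<in> X") auto
  qed
  then have "card (L \<inter> X) = q + 1"
    using p1.card_block[OF L] by (simp add: Int_absorb2)
  with card_Int_le_2[OF L X] p1.order_ge_2 show False
    by simp
qed

lemma codeword_singleton_even_imp_tangents:
  assumes cw: "codeword Pts B1 B2 {L} Os" and even: "even (card Os)"
  shows "odd q" and "Os = p2.tangents L"
proof -
  have L: "L \<in> B1" and Os: "Os \<subseteq> B2"
    using codewordD[OF cw] by auto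
  have parity: "even ((if Y \<in> Os then q else 0) + (if Y \<in> p2.tangents L then 1 else 0))"
    if "Y \<in> B2" for Y
  proof -
    have "card ({L} \<inter> p1.tangents Y) = (if Y \<in> p2.tangents L then 1 else 0)"
      using mem_tangents_swap[OF L that] by auto
    then show ?thesis
      using parity_on_B2_block[OF cw that] even by simp
  qed
  have "p2.tangents L \<noteq> {}"
    using p2.card_tangents[OF oval_B1_block[OF L]] by auto
  then obtain Y0 where Y0: "Y0 \<in> p2.tangents L"
    by blast
  then show odd_q: "odd q"
    using parity[of Y0] p2.tangents_subset by (cases "Y0 \<in> Os") auto
  show "Os = p2.tangents L"
  proof (intro set_eqI iffI)
    fix Y assume "Y \<in> Os"
    then show "Y \<in> p2.tangents L"
      using parity[of Y] Os odd_q by (cases "Y \<in> p2.tangents L") auto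
  next
    fix Y assume "Y \<in> p2.tangents L"
    then show "Y \<in> Os"
      using parity[of Y] p2.tangents_subset odd_q by (cases "Y \<in> Os") auto
  qed
qed

lemma card_private_tangents:
  assumes "Ls \<subseteq> B1" "finite Ls" "L \<in> Ls"
  shows "q + 2 \<le> card (p2.tangents L - (\<Union>L'\<in>Ls - {L}. p2.tangents L')) + card Ls"
proof -
  let ?E = "p2.tangents L - (\<Union>L'\<in>Ls - {L}. p2.tangents L')"
  let ?U = "\<Union>L'\<in>Ls - {L}. p2.tangents L \<inter> p2.tangents L'"
  have "?E \<union> ?U = p2.tangents L"
    by blast
  then have "q + 1 = card (?E \<union> ?U)"
    using p2.card_tangents[OF oval_B1_block] assms(1,3) by auto
  also have "\<dots> \<le> card ?E + card ?U"
    by (rule card_Un_le)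
  also have "card ?U \<le> (\<Sum>L'\<in>Ls - {L}. card (p2.tangents L \<inter> p2.tangents L'))"
    using assms(2) by (intro card_UN_le) simp
  also have "\<dots> = (\<Sum>L'\<in>Ls - {L}. 1)"
    using assms(1,3) card_common_tangents by (intro sum.cong) auto
  also have "\<dots> = card Ls - 1"
    using assms(2,3) by simp
  moreover have "0 < card Ls"
    using assms(2,3) card_gt_0_iff by blast
  ultimately show ?thesis
    by arith
qed

text \<open>A tangent of a single member of Ls must belong to Os by parity; at least q + 2 - |Ls| tangents
  of each member of Ls are of this kind.\<close>

lemma not_codeword_both_even:
  assumes cw: "codeword Pts B1 B2 Ls Os" and "Ls \<noteq> {}" "Os \<noteq> {}"
    and weight: "card Ls + card Os \<le> q + 2"
    and even: "even (card Ls)" "even (card Os)"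
  shows False
proof -
  have Ls: "Ls \<subseteq> B1" "finite Ls" and Os: "Os \<subseteq> B2" "finite Os"
    using codewordD[OF cw] by auto
  have "card Os \<noteq> 0"
    using \<open>Os \<noteq> {}\<close> Os(2) by auto
  obtain L1 where L1: "L1 \<in> Ls"
    using \<open>Ls \<noteq> {}\<close> by blast
  have "Ls \<noteq> {L1}"
    using even(1) by auto
  then obtain L2 where L12: "L1 \<in> Ls" "L2 \<in> Ls" "L1 \<noteq> L2"
    using L1 by blast
  define E where "E L = p2.tangents L - (\<Union>L'\<in>Ls - {L}. p2.tangents L')" for L
  have E_subset: "E L \<subseteq> Os" if "L \<in> Ls" for L
  proof
    fix Y assume Y: "Y \<in> E L"
    then have "Y \<in> B2"
      using p2.tangents_subset unfolding E_def by blast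
    have "Ls \<inter> p1.tangents Y = {L}"
      using Y that Ls(1) mem_tangents_swap[OF _ \<open>Y \<in> B2\<close>] unfolding E_def by blast
    then have "even (card Os + (if Y \<in> Os then q else 0) + 1)"
      using parity_on_B2_block[OF cw \<open>Y \<in> B2\<close>] by simp
    then show "Y \<in> Os"
      using even by (cases "Y \<in> Os") auto
  qed
  have "finite (E L1)" "finite (E L2)" "E L1 \<inter> E L2 = {}"
    using L12 E_subset Os(2) finite_subset unfolding E_def by blast+
  then have "card (E L1) + card (E L2) = card (E L1 \<union> E L2)"
    by (simp add: card_Un_disjoint)
  also have "\<dots> \<le> card Os"
    using E_subset L12 Os(2) by (intro card_mono) auto
  finally have "card (E L1) + card (E L2) \<le> card Os" .
  moreover have "q + 2 \<le> card (E L1) + card Ls" "q + 2 \<le> card (E L2) + card Ls"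
    using card_private_tangents[OF Ls] L12 unfolding E_def by auto
  ultimately show False
    using weight \<open>card Os \<noteq> 0\<close> by linarith
qed

lemma mixed_min_codeword:
  assumes cw: "codeword Pts B1 B2 Ls Os" and ne: "Ls \<noteq> {}" "Os \<noteq> {}"
    and weight: "card Ls + card Os \<le> q + 2"
  shows "odd q \<and> ((\<exists>L\<in>B1. Ls = {L} \<and> Os = p2.tangents L) \<or> (\<exists>X\<in>B2. Os = {X} \<and> Ls = p1.tangents X))"
proof -
  interpret swapped: compatible_planes Pts B2 B1 q
    by (rule swapped)
  have cw': "codeword Pts B2 B1 Os Ls"
    using cw codeword_swap by blast
  have Ls: "Ls \<subseteq> B1" and Os: "Os \<subseteq> B2"
    using codewordD[OF cw] by auto
  consider "odd (card Ls)" "odd (card Os)" | "odd (card Ls)" "even (card Os)"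
    | "even (card Ls)" "odd (card Os)" | "even (card Ls)" "even (card Os)"
    by blast
  then show ?thesis
  proof cases
    case 1
    then have "card Ls = 1" "card Os = 1"
      using card_eq_1_if_odd[OF cw ne(2) weight] swapped.card_eq_1_if_odd[OF cw' ne(1)] weight by auto
    then show ?thesis
      using not_codeword_singletons cw by (metis card_1_singletonE)
  next
    case 2
    then obtain L where "Ls = {L}"
      using card_eq_1_if_odd[OF cw ne(2) weight] by (metis card_1_singletonE)
    then show ?thesis
      using codeword_singleton_even_imp_tangents[of L Os] cw 2 Ls by auto
  next
    case 3
    then obtain X where "Os = {X}"
      using swapped.card_eq_1_if_odd[OF cw' ne(1)] weight by (metis add.commute card_1_singletonE)
    then show ?thesis
      using swapped.codeword_singleton_even_imp_tangents[of X Ls] cw' 3 Os by auto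
  next
    case 4
    then show ?thesis
      using not_codeword_both_even[OF cw ne weight] by blast
  qed
qed

lemma codeword_tangents:
  assumes "odd q" "L \<in> B1"
  shows "codeword Pts B1 B2 {L} (p2.tangents L)"
proof -
  have oval: "p2.oval L"
    using oval_B1_block[OF assms(2)] .
  have "even (card {L'\<in>{L}. P \<in> L'} + card {X\<in>p2.tangents L. P \<in> X})" if "P \<in> Pts" for P
  proof -
    have "{X\<in>p2.tangents L. P \<in> X} = p2.tangents L \<inter> p2.pencil P"
      using p2.Int_pencil[OF p2.tangents_subset] by simp
    moreover have "even ((if P \<in> L then 1 else 0) + card (p2.tangents L \<inter> p2.pencil P))"
      using p2.card_tangents_at[OF oval] p2.even_card_tangents_through_iff[OF oval]
        that assms(1) by (cases "P \<in> L") auto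
    ultimately show ?thesis
      by (simp only: card_filter_singleton)
  qed
  then show ?thesis
    using assms(2) p2.tangents_subset unfolding codeword_def by auto
qed

lemma min_weight_codeword_cases:
  assumes cw: "codeword Pts B1 B2 Ls Os" and ne: "(Ls, Os) \<noteq> ({}, {})"
    and weight: "card Ls + card Os \<le> q + 2"
  obtains (dual_hyperoval) "even q" "Os = {}" "card Ls = q + 2"
      "\<forall>P\<in>Pts. card {L\<in>Ls. P \<in> L} = 0 \<or> card {L\<in>Ls. P \<in> L} = 2"
    | (hyperoval) "even q" "Ls = {}" "card Os = q + 2"
      "\<forall>P\<in>Pts. card {X\<in>Os. P \<in> X} = 0 \<or> card {X\<in>Os. P \<in> X} = 2"
    | (line_and_tangents) L where "odd q" "L \<in> B1" "Ls = {L}" "Os = p2.tangents L"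
    | (oval_and_tangents) X where "odd q" "X \<in> B2" "Os = {X}" "Ls = p1.tangents X"
proof -
  have Ls: "Ls \<subseteq> B1" and Os: "Os \<subseteq> B2"
    and even: "\<forall>P\<in>Pts. even (card {L\<in>Ls. P \<in> L} + card {X\<in>Os. P \<in> X})"
    using cw unfolding codeword_def by auto
  consider "Os = {}" | "Ls = {}" "Os \<noteq> {}" | "Ls \<noteq> {}" "Os \<noteq> {}"
    by blast
  then show thesis
  proof cases
    case 1
    with ne even weight have "Ls \<noteq> {}" "\<forall>P\<in>Pts. even (card {L\<in>Ls. P \<in> L})" "card Ls \<le> q + 2"
      by auto
    from dual_hyperoval[OF p1.even_order_if_even_block_set[OF Ls this] 1
        p1.card_even_block_set[OF Ls this]] p1.degree_even_block_set[OF Ls this]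
    show thesis
      by blast
  next
    case 2
    with even weight have "\<forall>P\<in>Pts. even (card {X\<in>Os. P \<in> X})" "card Os \<le> q + 2"
      by auto
    note block_set = Os \<open>Os \<noteq> {}\<close> this
    from hyperoval[OF p2.even_order_if_even_block_set[OF block_set] 2(1)
        p2.card_even_block_set[OF block_set]] p2.degree_even_block_set[OF block_set]
    show thesis
      by blast
  next
    case 3
    then show thesis
      using mixed_min_codeword[OF cw 3 weight] line_and_tangents oval_and_tangents by blast
  qed
qed

end

section \<open>The plane PG(2, F)\<close>

definition dot :: "'a::field ^ 3 \<Rightarrow> 'a ^ 3 \<Rightarrow> 'a" where
  "dot u v = u$1 * v$1 + u$2 * v$2 + u$3 * v$3"

definition cross :: "'a::field ^ 3 \<Rightarrow> 'a ^ 3 \<Rightarrow> 'a ^ 3" where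
  "cross u v = vector [u$2 * v$3 - u$3 * v$2, u$3 * v$1 - u$1 * v$3, u$1 * v$2 - u$2 * v$1]"

lemma vec3_eq_iff: "x = y \<longleftrightarrow> x$1 = y$1 \<and> x$2 = y$2 \<and> x$3 = y$3"
  for x y :: "'a ^ 3"
  by (simp add: vec_eq_iff forall_3)

lemma cross_nth [simp]:
  "cross u v $ 1 = u$2 * v$3 - u$3 * v$2"
  "cross u v $ 2 = u$3 * v$1 - u$1 * v$3"
  "cross u v $ 3 = u$1 * v$2 - u$2 * v$1"
  by (simp_all add: cross_def)

lemma dot_smult_left [simp]: "dot (c *s u) v = c * dot u v"
  and dot_smult_right [simp]: "dot u (c *s v) = c * dot u v"
  and dot_add_left [simp]: "dot (u + w) v = dot u v + dot w v"
  and dot_zero_left [simp]: "dot 0 v = 0"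
  and dot_cross_self_left [simp]: "dot u (cross u v) = 0"
  and dot_cross_self_right [simp]: "dot v (cross u v) = 0"
  and dot_commute: "dot u v = dot v u"
  and dot_cross_cyclic: "dot (cross u v) w = dot (cross v w) u"
  by (simp_all add: dot_def algebra_simps)

lemma cross_smult_left [simp]: "cross (c *s u) v = c *s cross u v"
  and cross_smult_right [simp]: "cross u (c *s v) = c *s cross u v"
  and cross_add_left: "cross (u + w) v = cross u v + cross w v"
  and cross_add_right: "cross u (v + w) = cross u v + cross u w"
  and cross_self [simp]: "cross u u = 0"
  and cross_zero_left [simp]: "cross 0 u = 0"
  and cross_zero_right [simp]: "cross u 0 = 0"
  and cross_antisym: "cross v u = - cross u v"
  and cross_cross: "cross (cross u v) w = dot u w *s v - dot v w *s u"
  by (simp_all add: vec3_eq_iff dot_def algebra_simps)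

lemma cramer_rule:
  "dot (cross u v) e *s x = dot (cross x v) e *s u + dot (cross u x) e *s v + dot (cross u v) x *s e"
  by (simp add: vec3_eq_iff dot_def algebra_simps)

lemma eq_0_if_dot_eq_0:
  assumes "\<And>e. dot w e = 0"
  shows "w = 0"
  using assms[of "vector [1, 0, 0]"] assms[of "vector [0, 1, 0]"] assms[of "vector [0, 0, 1]"]
  by (simp add: dot_def vec3_eq_iff)

lemma ex_cross_nonzero:
  assumes "h \<noteq> 0"
  obtains f where "cross h f \<noteq> 0"
proof -
  have "cross h (vector [1, 0, 0]) \<noteq> 0 \<or> cross h (vector [0, 1, 0]) \<noteq> 0"
    using assms by (auto simp: vec3_eq_iff)
  then show thesis
    using that by blast
qed

lemma parallel_if_cross_eq_0:
  assumes "cross u v = 0" "dot u e \<noteq> 0"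
  shows "v = (dot v e / dot u e) *s u"
proof -
  have "dot u e *s v - dot v e *s u = 0"
    using assms(1) cross_cross[of u v e] by simp
  with assms(2) show ?thesis
    by (simp add: vec3_eq_iff field_simps)
qed

lemma cross_eq_0_iff:
  assumes "u \<noteq> 0"
  shows "cross u v = 0 \<longleftrightarrow> (\<exists>k. v = k *s u)"
proof
  assume "cross u v = 0"
  obtain e where "dot u e \<noteq> 0"
    using eq_0_if_dot_eq_0 assms by blast
  with parallel_if_cross_eq_0[OF \<open>cross u v = 0\<close>] show "\<exists>k. v = k *s u"
    by blast
qed auto

definition point_of :: "'a::field ^ 3 \<Rightarrow> ('a ^ 3) set" where
  "point_of v = {c *s v | c. True}"

definition line_of :: "'a::field ^ 3 \<Rightarrow> ('a ^ 3) set" where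
  "line_of h = {x. dot x h = 0}"

lemma mem_line_of [simp]: "x \<in> line_of h \<longleftrightarrow> dot x h = 0"
  by (simp add: line_of_def)

lemma pg_points_iff: "P \<in> pg_points \<longleftrightarrow> (\<exists>v. v \<noteq> 0 \<and> P = point_of v)"
  by (simp add: pg_points_def point_of_def)

lemma mem_point_of_self: "v \<in> point_of v"
proof -
  have "v = 1 *s v"
    by simp
  then show ?thesis
    unfolding point_of_def by blast
qed

lemma point_of_smult:
  assumes "k \<noteq> 0"
  shows "point_of (k *s v) = point_of v"
proof (intro set_eqI iffI)
  fix x assume "x \<in> point_of (k *s v)"
  then obtain c where "x = c *s (k *s v)"
    by (auto simp: point_of_def)
  then have "x = (c * k) *s v"
    by (simp add: vector_smult_assoc)
  then show "x \<in> point_of v"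
    unfolding point_of_def by blast
next
  fix x assume "x \<in> point_of v"
  then obtain c where "x = c *s v"
    by (auto simp: point_of_def)
  then have "x = (c / k) *s (k *s v)"
    using assms by (simp add: vector_smult_assoc)
  then show "x \<in> point_of (k *s v)"
    unfolding point_of_def by blast
qed

lemma point_of_eq_iff:
  assumes "v \<noteq> 0" "w \<noteq> 0"
  shows "point_of v = point_of w \<longleftrightarrow> cross v w = 0"
proof
  assume "point_of v = point_of w"
  then obtain c where "w = c *s v"
    using mem_point_of_self[of w] unfolding point_of_def by blast
  then show "cross v w = 0"
    by simp
next
  assume "cross v w = 0"
  then obtain k where k: "w = k *s v"
    using cross_eq_0_iff[OF assms(1)] by blast
  with assms(2) have "k \<noteq> 0"
    by auto
  with k show "point_of v = point_of w"
    by (simp add: point_of_smult)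
qed

lemma point_of_subset_line_of: "point_of v \<subseteq> line_of h \<longleftrightarrow> dot v h = 0"
  using mem_point_of_self[of v] by (auto simp: point_of_def line_of_def)

lemma line_of_smult: "k \<noteq> 0 \<Longrightarrow> line_of (k *s h) = line_of h"
  by (simp add: line_of_def)

lemma independent_iff_cross_nonzero:
  "(\<forall>a b. a *s u + b *s v = 0 \<longrightarrow> a = 0 \<and> b = 0) \<longleftrightarrow> cross u v \<noteq> 0"
proof
  assume indep: "\<forall>a b. a *s u + b *s v = 0 \<longrightarrow> a = 0 \<and> b = 0"
  show "cross u v \<noteq> 0"
  proof
    assume "cross u v = 0"
    show False
    proof (cases "u = 0")
      case True
      then show False
        using indep[rule_format, of 1 0] by simp
    next
      case False
      then obtain k where "v = k *s u"
        using cross_eq_0_iff \<open>cross u v = 0\<close> by blast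
      then show False
        using indep[rule_format, of k "-1"] by simp
    qed
  qed
next
  assume nonzero: "cross u v \<noteq> 0"
  show "\<forall>a b. a *s u + b *s v = 0 \<longrightarrow> a = 0 \<and> b = 0"
  proof (intro allI impI)
    fix a b assume "a *s u + b *s v = 0"
    then have "cross (a *s u + b *s v) v = 0" "cross u (a *s u + b *s v) = 0"
      by simp_all
    then have "a *s cross u v = 0" "b *s cross u v = 0"
      by (simp_all add: cross_add_left cross_add_right)
    with nonzero show "a = 0 \<and> b = 0"
      by simp
  qed
qed

lemma span_eq_line_of_cross:
  assumes "cross u v \<noteq> 0"
  shows "{a *s u + b *s v | a b. True} = line_of (cross u v)"
proof (intro set_eqI iffI)
  fix x assume "x \<in> {a *s u + b *s v | a b. True}"
  then show "x \<in> line_of (cross u v)"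
    by (auto simp: line_of_def)
next
  fix x assume "x \<in> line_of (cross u v)"
  then have "dot (cross u v) x = 0"
    by (simp add: line_of_def dot_commute)
  obtain e where e: "dot (cross u v) e \<noteq> 0"
    using eq_0_if_dot_eq_0 assms by blast
  \<comment> \<open>Cramer's rule for the basis u, v, e, in which x has no e-component.\<close>
  let ?d = "dot (cross u v) e"
  have "?d *s x = dot (cross x v) e *s u + dot (cross u x) e *s v"
    using cramer_rule[of u v e x] \<open>dot (cross u v) x = 0\<close> by simp
  then have "(1 / ?d) *s (?d *s x) = (dot (cross x v) e / ?d) *s u + (dot (cross u x) e / ?d) *s v"
    by (simp add: vector_add_ldistrib vector_smult_assoc)
  then have "x = (dot (cross x v) e / ?d) *s u + (dot (cross u x) e / ?d) *s v"
    using e by (simp add: vector_smult_assoc)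
  then show "x \<in> {a *s u + b *s v | a b. True}"
    by blast
qed

lemma line_of_basis:
  assumes "h \<noteq> 0"
  obtains u v where "cross u v \<noteq> 0" "line_of h = {a *s u + b *s v | a b. True}"
proof -
  obtain f where f: "cross h f \<noteq> 0"
    using ex_cross_nonzero[OF assms] .
  obtain g where g: "dot (cross h f) g \<noteq> 0"
    using eq_0_if_dot_eq_0 f by blast
  have "cross (cross h f) (cross h g) = dot (cross h f) g *s h"
    by (simp add: vec3_eq_iff dot_def algebra_simps)
  with g assms have nonzero: "cross (cross h f) (cross h g) \<noteq> 0"
    and "line_of h = line_of (cross (cross h f) (cross h g))"
    by (auto simp: line_of_smult)
  then show thesis
    using that[OF nonzero] span_eq_line_of_cross[OF nonzero] by simp
qed

lemma pg_lines_iff: "L \<in> pg_lines \<longleftrightarrow> (\<exists>h. h \<noteq> 0 \<and> L = line_of h)"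
proof
  assume "L \<in> pg_lines"
  then obtain u v where "cross u v \<noteq> 0" "L = {a *s u + b *s v | a b. True}"
    unfolding pg_lines_def independent_iff_cross_nonzero by blast
  then show "\<exists>h. h \<noteq> 0 \<and> L = line_of h"
    using span_eq_line_of_cross by blast
next
  assume "\<exists>h. h \<noteq> 0 \<and> L = line_of h"
  then obtain h where "h \<noteq> 0" "L = line_of h"
    by blast
  moreover obtain u v where "cross u v \<noteq> 0" "line_of h = {a *s u + b *s v | a b. True}"
    using line_of_basis[OF \<open>h \<noteq> 0\<close>] .
  ultimately show "L \<in> pg_lines"
    unfolding pg_lines_def independent_iff_cross_nonzero by blast
qed

lemma line_of_mem_pg_lines: "h \<noteq> 0 \<Longrightarrow> line_of h \<in> pg_lines"
  by (auto simp: pg_lines_iff)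

lemma line_of_subset_imp_cross_eq_0:
  assumes "line_of h \<subseteq> line_of h'"
  shows "cross h h' = 0"
proof -
  have "cross h f \<in> line_of h" for f
    by (simp add: line_of_def dot_commute)
  then have "dot (cross h f) h' = 0" for f
    using assms by (auto simp: line_of_def)
  then have "dot (cross h' h) f = 0" for f
    using dot_cross_cyclic[of h f h'] dot_cross_cyclic[of f h' h] by simp
  then have "cross h' h = 0"
    by (rule eq_0_if_dot_eq_0)
  then show ?thesis
    by (simp add: cross_antisym[of h'])
qed

lemma line_of_eq_iff:
  assumes "h \<noteq> 0" "h' \<noteq> 0"
  shows "line_of h = line_of h' \<longleftrightarrow> cross h h' = 0"
proof
  assume "cross h h' = 0"
  then obtain k where k: "h' = k *s h"
    using cross_eq_0_iff[OF assms(1)] by blast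
  with assms(2) have "k \<noteq> 0"
    by auto
  with k show "line_of h = line_of h'"
    by (simp add: line_of_smult)
next
  assume "line_of h = line_of h'"
  then show "cross h h' = 0"
    by (intro line_of_subset_imp_cross_eq_0) simp
qed

definition points_on :: "('a::field ^ 3) set \<Rightarrow> ('a ^ 3) set set" where
  "points_on L = {P\<in>pg_points. P \<subseteq> L}"

lemma mem_points_on: "P \<in> points_on L \<longleftrightarrow> P \<in> pg_points \<and> P \<subseteq> L"
  by (simp add: points_on_def)

lemma mem_points_on_line_of:
  "P \<in> points_on (line_of h) \<longleftrightarrow> (\<exists>v. v \<noteq> 0 \<and> P = point_of v \<and> dot v h = 0)"
  unfolding mem_points_on pg_points_iff using point_of_subset_line_of by blast

lemma line_of_subset_if_points_on_subset:
  assumes "points_on (line_of h) \<subseteq> points_on (line_of h')"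
  shows "line_of h \<subseteq> line_of h'"
proof
  fix x assume x: "x \<in> line_of h"
  show "x \<in> line_of h'"
  proof (cases "x = 0")
    case False
    with x have "point_of x \<in> points_on (line_of h)"
      by (auto simp: mem_points_on_line_of)
    with assms have "point_of x \<in> points_on (line_of h')"
      by blast
    then have "point_of x \<subseteq> line_of h'"
      by (simp add: mem_points_on)
    then show ?thesis
      using mem_point_of_self by blast
  qed simp
qed

lemma inj_on_points_on: "inj_on points_on pg_lines"
proof (rule inj_onI)
  fix L M assume "L \<in> pg_lines" "M \<in> pg_lines" "points_on L = points_on M"
  then obtain h h' where "L = line_of h" "M = line_of h'" "points_on (line_of h) = points_on (line_of h')"
    by (auto simp: pg_lines_iff)
  then show "L = M"
    using line_of_subset_if_points_on_subset[of h h'] line_of_subset_if_points_on_subset[of h' h]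
    by simp
qed

lemma lin_comb_nonzero:
  assumes "cross u v \<noteq> 0" "a \<noteq> 0 \<or> b \<noteq> 0"
  shows "a *s u + b *s v \<noteq> 0"
  using assms independent_iff_cross_nonzero by blast

lemma points_on_line_of_cross:
  assumes uv: "cross u v \<noteq> 0"
  shows "points_on (line_of (cross u v)) = insert (point_of v) (range (\<lambda>t. point_of (u + t *s v)))"
proof (intro set_eqI iffI)
  fix P assume "P \<in> points_on (line_of (cross u v))"
  then obtain x where x: "x \<noteq> 0" "P = point_of x" "x \<in> line_of (cross u v)"
    by (auto simp: mem_points_on_line_of)
  then obtain a b where ab: "x = a *s u + b *s v"
    using span_eq_line_of_cross[OF uv] by blast
  show "P \<in> insert (point_of v) (range (\<lambda>t. point_of (u + t *s v)))"
  proof (cases "a = 0")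
    case True
    with ab x(1) have "x = b *s v" "b \<noteq> 0"
      by auto
    then have "P = point_of v"
      using x(2) point_of_smult by simp
    then show ?thesis
      by simp
  next
    case False
    with ab have "x = a *s (u + (b / a) *s v)"
      by (simp add: vector_add_ldistrib vector_smult_assoc)
    then have "P = point_of (u + (b / a) *s v)"
      using x(2) False point_of_smult by simp
    then show ?thesis
      by simp
  qed
next
  have on_line: "point_of (a *s u + b *s v) \<in> points_on (line_of (cross u v))" if "a \<noteq> 0 \<or> b \<noteq> 0" for a b
    using lin_comb_nonzero[OF uv that] by (auto simp: mem_points_on_line_of)
  fix P assume "P \<in> insert (point_of v) (range (\<lambda>t. point_of (u + t *s v)))"
  then consider "P = point_of v" | t where "P = point_of (u + t *s v)"
    by auto
  then show "P \<in> points_on (line_of (cross u v))"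
    using on_line[of 0 1] on_line[of 1] by cases simp_all
qed

lemma inj_point_of_add_smult:
  assumes uv: "cross u v \<noteq> 0"
  shows "inj (\<lambda>t. point_of (u + t *s v))"
proof (rule injI)
  fix s t assume "point_of (u + s *s v) = point_of (u + t *s v)"
  then have "cross (u + s *s v) (u + t *s v) = 0"
    using point_of_eq_iff lin_comb_nonzero[OF uv, of 1] by (metis vector_smult_lid zero_neq_one)
  moreover have "cross (u + s *s v) (u + t *s v) = (t - s) *s cross u v"
    by (simp add: vec3_eq_iff algebra_simps)
  ultimately show "s = t"
    using uv by simp
qed

lemma point_of_notin_range_add_smult:
  assumes uv: "cross u v \<noteq> 0"
  shows "point_of v \<notin> range (\<lambda>t. point_of (u + t *s v))"
proof
  assume "point_of v \<in> range (\<lambda>t. point_of (u + t *s v))"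
  then obtain t where "point_of v = point_of (u + t *s v)"
    by auto
  moreover have "v \<noteq> 0" "u + t *s v \<noteq> 0"
    using uv lin_comb_nonzero[OF uv, of 1 t] by auto
  ultimately have "cross v (u + t *s v) = 0"
    using point_of_eq_iff by blast
  moreover have "cross v (u + t *s v) = - cross u v"
    by (simp add: vec3_eq_iff algebra_simps)
  ultimately show False
    using uv by simp
qed

lemma card_points_on:
  fixes L :: "('a::{finite,field} ^ 3) set"
  assumes "L \<in> pg_lines"
  shows "card (points_on L) = CARD('a) + 1"
proof -
  obtain h where h: "h \<noteq> 0" "L = line_of h"
    using assms pg_lines_iff by blast
  obtain u v where uv: "cross u v \<noteq> 0" and "line_of h = {a *s u + b *s v | a b. True}"
    using line_of_basis[OF h(1)] .
  then have "L = line_of (cross u v)"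
    using h(2) span_eq_line_of_cross by simp
  moreover have "card (range (\<lambda>t. point_of (u + t *s v))) = CARD('a)"
    using inj_point_of_add_smult[OF uv] by (simp add: card_image)
  ultimately show ?thesis
    using points_on_line_of_cross[OF uv] point_of_notin_range_add_smult[OF uv] by simp
qed

definition affine_point :: "'a::field \<times> 'a \<Rightarrow> ('a ^ 3) set" where
  "affine_point p = point_of (vector [1, fst p, snd p])"

lemma vector_1_nonzero: "vector [1, a, b] \<noteq> (0 :: 'a::field ^ 3)"
  by (simp add: vec3_eq_iff)

lemma inj_affine_point: "inj affine_point"
proof (rule injI)
  fix p p' :: "'a \<times> 'a" assume "affine_point p = affine_point p'"
  then have "cross (vector [1, fst p, snd p]) (vector [1, fst p', snd p']) = (0 :: 'a ^ 3)"
    unfolding affine_point_def using point_of_eq_iff[OF vector_1_nonzero vector_1_nonzero] by blast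
  then show "p = p'"
    by (simp add: vec3_eq_iff prod_eq_iff)
qed

lemma pg_points_eq:
  "pg_points = points_on (line_of (vector [1, 0, 0])) \<union> range (affine_point :: 'a::field \<times> 'a \<Rightarrow> _)"
  (is "_ = ?infinity \<union> _")
proof (intro set_eqI iffI)
  fix P :: "('a ^ 3) set" assume "P \<in> pg_points"
  then obtain x where x: "x \<noteq> 0" "P = point_of x"
    by (auto simp: pg_points_iff)
  show "P \<in> ?infinity \<union> range affine_point"
  proof (cases "x$1 = 0")
    case True
    then show ?thesis
      using x by (auto simp: mem_points_on_line_of dot_def)
  next
    case False
    then have "x = x$1 *s vector [1, x$2 / x$1, x$3 / x$1]"
      by (simp add: vec3_eq_iff)
    then have "P = affine_point (x$2 / x$1, x$3 / x$1)"
      using x(2) False point_of_smult unfolding affine_point_def by (metis fst_conv snd_conv)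
    then show ?thesis
      by simp
  qed
next
  fix P assume "P \<in> ?infinity \<union> range affine_point"
  then show "P \<in> pg_points"
    using vector_1_nonzero by (auto simp: points_on_def affine_point_def pg_points_iff)
qed

lemma card_pg_points:
  "card (pg_points :: ('a::{finite,field} ^ 3) set set) = CARD('a) * CARD('a) + CARD('a) + 1"
proof -
  let ?infinity = "points_on (line_of (vector [1, 0, 0] :: 'a ^ 3))"
  have "?infinity \<inter> range affine_point = {}"
    by (auto simp: affine_point_def mem_points_on_line_of point_of_eq_iff vector_1_nonzero
        cross_eq_0_iff dot_def)
  then have "card (pg_points :: ('a ^ 3) set set) = card ?infinity + card (range (affine_point :: 'a \<times> 'a \<Rightarrow> _))"
    unfolding pg_points_eq by (rule card_Un_disjoint[rotated 2]) simp_all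
  moreover have "card (range (affine_point :: 'a \<times> 'a \<Rightarrow> _)) = CARD('a) * CARD('a)"
    using card_image[OF inj_affine_point] by simp
  moreover have "card ?infinity = CARD('a) + 1"
    by (intro card_points_on line_of_mem_pg_lines) (simp add: vec3_eq_iff)
  ultimately show ?thesis
    by simp
qed

definition polar :: "('a::field ^ 3) set \<Rightarrow> ('a ^ 3) set" where
  "polar P = {x. \<forall>y\<in>P. dot x y = 0}"

lemma polar_point_of: "polar (point_of v) = line_of v"
  using mem_point_of_self[of v] by (auto simp: polar_def point_of_def)

lemma bij_betw_polar: "bij_betw polar pg_points pg_lines"
proof (rule bij_betw_imageI)
  show "inj_on polar pg_points"
  proof (rule inj_onI)
    fix P Q assume "P \<in> pg_points" "Q \<in> pg_points" "polar P = polar Q"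
    then obtain v w where "v \<noteq> 0" "w \<noteq> 0" "P = point_of v" "Q = point_of w" "line_of v = line_of w"
      by (auto simp: pg_points_iff polar_point_of)
    then show "P = Q"
      by (simp add: point_of_eq_iff line_of_eq_iff)
  qed
  show "polar ` pg_points = pg_lines"
  proof (intro set_eqI iffI)
    fix L assume "L \<in> polar ` pg_points"
    then obtain v where "v \<noteq> 0" "L = line_of v"
      by (auto simp: pg_points_iff polar_point_of)
    then show "L \<in> pg_lines"
      by (auto simp: pg_lines_iff)
  next
    fix L assume "L \<in> pg_lines"
    then obtain h where "h \<noteq> 0" "L = line_of h"
      by (auto simp: pg_lines_iff)
    then have "L = polar (point_of h)" "point_of h \<in> pg_points"
      by (auto simp: polar_point_of pg_points_iff)
    then show "L \<in> polar ` pg_points"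
      by blast
  qed
qed

lemma subset_polar_iff:
  assumes "P \<in> pg_points" "Q \<in> pg_points"
  shows "P \<subseteq> polar Q \<longleftrightarrow> Q \<subseteq> polar P"
proof -
  obtain v w where "P = point_of v" "Q = point_of w"
    using assms by (auto simp: pg_points_iff)
  then show ?thesis
    by (simp add: polar_point_of point_of_subset_line_of dot_commute)
qed

lemma card_points_on_Int:
  assumes "L \<in> pg_lines" "M \<in> pg_lines" "L \<noteq> M"
  shows "card (points_on L \<inter> points_on M) = 1"
proof -
  obtain h h' where h: "h \<noteq> 0" "L = line_of h" and h': "h' \<noteq> 0" "M = line_of h'"
    using assms(1,2) by (auto simp: pg_lines_iff)
  let ?w = "cross h h'"
  have "?w \<noteq> 0"
    using line_of_eq_iff[OF h(1) h'(1)] h(2) h'(2) assms(3) by simp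
  have "points_on L \<inter> points_on M = {point_of ?w}"
  proof (intro set_eqI iffI)
    fix P assume "P \<in> points_on L \<inter> points_on M"
    then obtain x where x: "x \<noteq> 0" "P = point_of x" "dot x h = 0"
      using h(2) by (auto simp: mem_points_on_line_of)
    moreover have "point_of x \<subseteq> line_of h'"
      using \<open>P \<in> points_on L \<inter> points_on M\<close> h'(2) x(2) by (auto simp: points_on_def)
    ultimately have "cross ?w x = 0"
      using cross_cross[of h h' x] by (simp add: dot_commute point_of_subset_line_of)
    then show "P \<in> {point_of ?w}"
      using point_of_eq_iff[OF \<open>?w \<noteq> 0\<close> x(1)] x(2) by simp
  next
    fix P assume "P \<in> {point_of ?w}"
    then show "P \<in> points_on L \<inter> points_on M"
      using h(2) h'(2) \<open>?w \<noteq> 0\<close> by (auto simp: mem_points_on_line_of dot_commute)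
  qed
  then show ?thesis
    by simp
qed

lemma card_field_ge_2: "2 \<le> CARD('a::{finite,field})"
  using card_mono[of "UNIV :: 'a set" "{0, 1}"] by simp

lemma projective_plane_pg:
  "projective_plane (pg_points :: ('a::{finite,field} ^ 3) set set) (points_on ` pg_lines) CARD('a)"
proof
  show "card (pg_points :: ('a ^ 3) set set) = CARD('a) * CARD('a) + CARD('a) + 1"
    by (rule card_pg_points)
  show "b \<subseteq> pg_points" if "b \<in> points_on ` (pg_lines :: ('a ^ 3) set set)" for b
    using that by (auto simp: points_on_def)
  show "card b = CARD('a) + 1" if "b \<in> points_on ` (pg_lines :: ('a ^ 3) set set)" for b
    using that card_points_on by auto
  have "card (points_on ` (pg_lines :: ('a ^ 3) set set)) = card (pg_lines :: ('a ^ 3) set set)"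
    by (rule card_image[OF inj_on_points_on])
  also have "\<dots> = card (pg_points :: ('a ^ 3) set set)"
    using bij_betw_same_card[OF bij_betw_polar] by (rule sym)
  finally show "card (points_on ` (pg_lines :: ('a ^ 3) set set)) = CARD('a) * CARD('a) + CARD('a) + 1"
    using card_pg_points by simp
  show "card (b \<inter> c) = 1"
    if "b \<in> points_on ` (pg_lines :: ('a ^ 3) set set)" "c \<in> points_on ` pg_lines" "b \<noteq> c" for b c
    using that card_points_on_Int by auto
  show "2 \<le> CARD('a)"
    by (rule card_field_ge_2)
qed

section \<open>Projective bundles\<close>

lemma projective_plane_bundle:
  fixes \<Gamma> :: "('a::{finite,field} ^ 3) set set set"
  assumes "projective_bundle \<Gamma>"
  shows "projective_plane pg_points \<Gamma> CARD('a)"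
  using assms card_pg_points card_field_ge_2
  unfolding projective_bundle_def is_oval_def projective_plane_def by (auto simp: power2_eq_square)

lemma points_on_Int:
  assumes "X \<subseteq> pg_points"
  shows "points_on L \<inter> X = {P\<in>X. P \<subseteq> L}"
  using assms by (auto simp: points_on_def)

lemma compatible_planes_bundle:
  fixes \<Gamma> :: "('a::{finite,field} ^ 3) set set set"
  assumes "projective_bundle \<Gamma>"
  shows "compatible_planes pg_points (points_on ` pg_lines) \<Gamma> CARD('a)"
proof -
  have "card (points_on L \<inter> X) \<le> 2" if "L \<in> pg_lines" "X \<in> \<Gamma>" for L X
    using assms that points_on_Int[of X L]
    unfolding projective_bundle_def is_oval_def meet_def by auto
  then show ?thesis
    using projective_plane_pg projective_plane_bundle[OF assms]
    by (auto simp: compatible_planes_def compatible_planes_axioms_def)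
qed

lemma card_lines_through:
  assumes "Ls \<subseteq> pg_lines" "P \<in> pg_points"
  shows "card {L\<in>Ls. P \<subseteq> L} = card {b\<in>points_on ` Ls. P \<in> b}"
proof -
  have "{b\<in>points_on ` Ls. P \<in> b} = points_on ` {L\<in>Ls. P \<subseteq> L}"
  proof (intro set_eqI iffI)
    fix b assume "b \<in> {b\<in>points_on ` Ls. P \<in> b}"
    then obtain L where "L \<in> Ls" "b = points_on L" "P \<in> points_on L"
      by blast
    then show "b \<in> points_on ` {L\<in>Ls. P \<subseteq> L}"
      unfolding mem_points_on by blast
  next
    fix b assume "b \<in> points_on ` {L\<in>Ls. P \<subseteq> L}"
    then obtain L where "L \<in> Ls" "P \<subseteq> L" "b = points_on L"
      by blast
    moreover from this(2) have "P \<in> points_on L"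
      using assms(2) by (simp add: mem_points_on)
    ultimately show "b \<in> {b\<in>points_on ` Ls. P \<in> b}"
      by blast
  qed
  moreover have "{L\<in>Ls. P \<subseteq> L} \<subseteq> pg_lines"
    using assms(1) by blast
  then have "inj_on points_on {L\<in>Ls. P \<subseteq> L}"
    by (rule inj_on_subset[OF inj_on_points_on])
  ultimately show ?thesis
    by (simp add: card_image)
qed

lemma in_code_iff_codeword:
  "in_code \<Gamma> Ls Os \<longleftrightarrow> Ls \<subseteq> pg_lines \<and> codeword pg_points (points_on ` pg_lines) \<Gamma> (points_on ` Ls) Os"
proof (cases "Ls \<subseteq> pg_lines")
  case True
  then have "points_on ` Ls \<subseteq> points_on ` pg_lines"
    by blast
  moreover have "(\<forall>P\<in>pg_points. even (card {L\<in>Ls. P \<subseteq> L} + card {X\<in>Os. P \<in> X}))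
      \<longleftrightarrow> (\<forall>P\<in>pg_points. even (card {b\<in>points_on ` Ls. P \<in> b} + card {X\<in>Os. P \<in> X}))"
    using card_lines_through[OF True] by (intro ball_cong) simp_all
  ultimately show ?thesis
    using True by (simp add: in_code_def codeword_def)
qed (simp add: in_code_def)

lemma tangent_iff_card_points_on_Int:
  assumes "X \<subseteq> pg_points"
  shows "tangent L X \<longleftrightarrow> card (points_on L \<inter> X) = 1"
  using points_on_Int[OF assms] by (simp add: tangent_def meet_def)

lemma card_polar_lines_through:
  assumes H: "H \<subseteq> pg_points" and P: "P \<in> pg_points"
  shows "card {L\<in>polar ` H. P \<subseteq> L} = card (points_on (polar P) \<inter> H)"
proof -
  have "{L\<in>polar ` H. P \<subseteq> L} = polar ` (points_on (polar P) \<inter> H)"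
  proof (intro set_eqI iffI)
    fix L assume "L \<in> {L\<in>polar ` H. P \<subseteq> L}"
    then obtain Q where Q: "Q \<in> H" "L = polar Q" "P \<subseteq> polar Q"
      by blast
    with H have "Q \<in> pg_points" "Q \<subseteq> polar P"
      using subset_polar_iff[OF P] by blast+
    then have "Q \<in> points_on (polar P)"
      by (simp add: mem_points_on)
    with Q show "L \<in> polar ` (points_on (polar P) \<inter> H)"
      by blast
  next
    fix L assume "L \<in> polar ` (points_on (polar P) \<inter> H)"
    then obtain Q where Q: "Q \<in> H" "Q \<in> points_on (polar P)" "L = polar Q"
      by blast
    then have "P \<subseteq> polar Q"
      using subset_polar_iff[OF P] by (simp add: mem_points_on)
    with Q show "L \<in> {L\<in>polar ` H. P \<subseteq> L}"
      by blast
  qed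
  moreover have "inj_on polar (points_on (polar P) \<inter> H)"
    using bij_betw_imp_inj_on[OF bij_betw_polar] by (rule inj_on_subset) (use H in blast)
  ultimately show ?thesis
    by (simp add: card_image)
qed

lemma in_code_polar_hyperoval:
  assumes H: "H \<subseteq> pg_points" "\<forall>b\<in>points_on ` pg_lines. card (b \<inter> H) = 0 \<or> card (b \<inter> H) = 2"
  shows "in_code \<Gamma> (polar ` H) {}"
proof -
  have "even (card {L\<in>polar ` H. P \<subseteq> L})" if P: "P \<in> pg_points" for P
  proof -
    have "points_on (polar P) \<in> points_on ` pg_lines"
      using bij_betw_imp_surj_on[OF bij_betw_polar] P by blast
    then have "card (points_on (polar P) \<inter> H) = 0 \<or> card (points_on (polar P) \<inter> H) = 2"
      using H(2) by blast
    then show ?thesis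
      using card_polar_lines_through[OF H(1) P] by auto
  qed
  moreover have "polar ` H \<subseteq> pg_lines"
    using bij_betw_imp_surj_on[OF bij_betw_polar] H(1) by blast
  ultimately show ?thesis
    by (simp add: in_code_def)
qed

locale pg_bundle =
  fixes \<Gamma> :: "('a::{finite,field} ^ 3) set set set"
  assumes is_bundle: "projective_bundle \<Gamma>"

sublocale pg_bundle \<subseteq> compatible_planes pg_points "points_on ` pg_lines" \<Gamma> "CARD('a)"
  using is_bundle by (rule compatible_planes_bundle)

context pg_bundle
begin

lemma tangents_points_on: "p2.tangents (points_on L) = {X\<in>\<Gamma>. tangent L X}"
proof -
  have "tangent L X \<longleftrightarrow> card (X \<inter> points_on L) = 1" if "X \<in> \<Gamma>" for X
    using tangent_iff_card_points_on_Int[OF p2.block_subset[OF that]] by (simp add: Int_commute)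
  then show ?thesis
    by (auto simp: p2.tangents_def)
qed

lemma tangents_oval:
  assumes "X \<in> \<Gamma>"
  shows "p1.tangents X = points_on ` {L\<in>pg_lines. tangent L X}"
proof -
  have "tangent L X \<longleftrightarrow> card (points_on L \<inter> X) = 1" for L
    using tangent_iff_card_points_on_Int[OF p2.block_subset[OF assms]] .
  then show ?thesis
    by (auto simp: p1.tangents_def)
qed

lemma card_tangent_ovals:
  assumes "L \<in> pg_lines"
  shows "card {X\<in>\<Gamma>. tangent L X} = CARD('a) + 1"
  using p2.card_tangents[OF oval_B1_block, of "points_on L"] assms by (simp add: tangents_points_on)

lemma card_tangent_lines:
  assumes "X \<in> \<Gamma>"
  shows "card {L\<in>pg_lines. tangent L X} = CARD('a) + 1"
proof -
  have "inj_on points_on {L\<in>pg_lines. tangent L X}"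
    using inj_on_points_on by (rule inj_on_subset) blast
  then show ?thesis
    using p1.card_tangents[OF oval_B2_block[OF assms]] tangents_oval[OF assms] by (simp add: card_image)
qed

lemma ex_min_weight_in_code:
  "\<exists>Ls Os. in_code \<Gamma> Ls Os \<and> (Ls, Os) \<noteq> ({}, {}) \<and> weight Ls Os = CARD('a) + 2"
proof (cases "odd CARD('a)")
  case True
  define L :: "('a ^ 3) set" where "L = line_of (vector [1, 0, 0])"
  have L: "L \<in> pg_lines"
    unfolding L_def by (intro line_of_mem_pg_lines) (simp add: vec3_eq_iff)
  then have "in_code \<Gamma> {L} {X\<in>\<Gamma>. tangent L X}"
    using codeword_tangents[OF True, of "points_on L"] by (simp add: in_code_iff_codeword tangents_points_on)
  moreover have "weight {L} {X\<in>\<Gamma>. tangent L X} = CARD('a) + 2"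
    using card_tangent_ovals[OF L] by (simp add: weight_def)
  ultimately show ?thesis
    by blast
next
  case False
  have "\<Gamma> \<noteq> {}"
    using p2.card_Bl by auto
  then obtain X where "X \<in> \<Gamma>"
    by blast
  obtain H :: "('a ^ 3) set set" where H: "H \<subseteq> pg_points" "card H = CARD('a) + 2"
    "\<forall>b\<in>points_on ` pg_lines. card (b \<inter> H) = 0 \<or> card (b \<inter> H) = 2"
    using p1.ex_hyperoval[OF oval_B2_block[OF \<open>X \<in> \<Gamma>\<close>]] False by blast
  have "card (polar ` H) = CARD('a) + 2"
    using card_image[OF inj_on_subset[OF bij_betw_imp_inj_on[OF bij_betw_polar] H(1)]] H(2) by simp
  then have "(polar ` H, {}) \<noteq> ({}, {})" "weight (polar ` H) {} = CARD('a) + 2"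
    by (auto simp: weight_def)
  with in_code_polar_hyperoval[OF H(1,3)] show ?thesis
    by blast
qed

lemma min_weight_in_code_cases:
  assumes code: "in_code \<Gamma> Ls Os" and nonzero: "(Ls, Os) \<noteq> ({}, {})"
    and weight: "weight Ls Os \<le> CARD('a) + 2"
  obtains (dual_hyperoval) "even CARD('a)" "Os = {}" "dual_hyperoval Ls"
    | (hyperoval) "even CARD('a)" "Ls = {}" "hyperoval_of_ovals \<Gamma> Os"
    | (line_and_tangents) L where "odd CARD('a)" "L \<in> pg_lines" "Ls = {L}" "Os = {X\<in>\<Gamma>. tangent L X}"
    | (oval_and_tangents) X where "odd CARD('a)" "X \<in> \<Gamma>" "Os = {X}" "Ls = {L\<in>pg_lines. tangent L X}"
proof -
  have Ls: "Ls \<subseteq> pg_lines" and cw: "codeword pg_points (points_on ` pg_lines) \<Gamma> (points_on ` Ls) Os"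
    using code by (simp_all add: in_code_iff_codeword)
  have card_Ls: "card (points_on ` Ls) = card Ls"
    using inj_on_subset[OF inj_on_points_on Ls] by (rule card_image)
  have image_eq_iff: "points_on ` Ls = points_on ` Ms \<longleftrightarrow> Ls = Ms" if "Ms \<subseteq> pg_lines" for Ms
    using inj_on_image_eq_iff[OF inj_on_points_on Ls that] .
  have "(points_on ` Ls, Os) \<noteq> ({}, {})" "card (points_on ` Ls) + card Os \<le> CARD('a) + 2"
    using nonzero weight card_Ls by (auto simp: weight_def)
  with cw show thesis
  proof (cases rule: min_weight_codeword_cases)
    case dual_hyperoval
    then have "dual_hyperoval Ls"
      unfolding dual_hyperoval_def using Ls card_Ls card_lines_through[OF Ls] by simp
    with dual_hyperoval show thesis
      using that(1) by blast
  next
    case hyperoval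
    then have "Ls = {}" "hyperoval_of_ovals \<Gamma> Os"
      unfolding hyperoval_of_ovals_def using codewordD(2)[OF cw] by simp_all
    with hyperoval show thesis
      using that(2) by blast
  next
    case (line_and_tangents b)
    then obtain L where L: "L \<in> pg_lines" "b = points_on L"
      by blast
    with line_and_tangents have "Ls = {L}" "Os = {X\<in>\<Gamma>. tangent L X}"
      using image_eq_iff[of "{L}"] tangents_points_on by simp_all
    with line_and_tangents(1) L(1) show thesis
      by (rule that(3))
  next
    case (oval_and_tangents X)
    then have "points_on ` Ls = points_on ` {L\<in>pg_lines. tangent L X}"
      using tangents_oval by simp
    then have "Ls = {L\<in>pg_lines. tangent L X}"
      using image_eq_iff[of "{L\<in>pg_lines. tangent L X}"] by simp
    with oval_and_tangents(1-3) show thesis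
      by (rule that(4))
  qed
qed

lemma min_weight_in_code:
  assumes "in_code \<Gamma> Ls Os" "(Ls, Os) \<noteq> ({}, {})" "weight Ls Os \<le> CARD('a) + 2"
  shows "weight Ls Os = CARD('a) + 2
    \<and> (odd CARD('a) \<longrightarrow> (\<exists>X\<in>\<Gamma>. Os = {X} \<and> Ls = {L\<in>pg_lines. tangent L X})
                       \<or> (\<exists>L\<in>pg_lines. Ls = {L} \<and> Os = {X\<in>\<Gamma>. tangent L X}))
    \<and> (even CARD('a) \<longrightarrow> (Os = {} \<and> dual_hyperoval Ls) \<or> (Ls = {} \<and> hyperoval_of_ovals \<Gamma> Os))"
  using assms
proof (cases rule: min_weight_in_code_cases)
  case dual_hyperoval
  then have "weight Ls Os = CARD('a) + 2"
    by (simp add: weight_def dual_hyperoval_def)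
  with dual_hyperoval show ?thesis
    by blast
next
  case hyperoval
  then have "weight Ls Os = CARD('a) + 2"
    by (simp add: weight_def hyperoval_of_ovals_def)
  with hyperoval show ?thesis
    by blast
next
  case (line_and_tangents L)
  then have "weight Ls Os = CARD('a) + 2"
    using card_tangent_ovals by (simp add: weight_def)
  with line_and_tangents show ?thesis
    by blast
next
  case (oval_and_tangents X)
  then have "weight Ls Os = CARD('a) + 2"
    using card_tangent_lines by (simp add: weight_def)
  with oval_and_tangents show ?thesis
    by blast
qed

lemma weight_lower_bound:
  assumes "in_code \<Gamma> Ls Os" "(Ls, Os) \<noteq> ({}, {})"
  shows "CARD('a) + 2 \<le> weight Ls Os"
proof (rule ccontr)
  assume "\<not> CARD('a) + 2 \<le> weight Ls Os"
  with min_weight_in_code[OF assms, THEN conjunct1] show False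
    by simp
qed

end

theorem theorem4p13:
  fixes \<Gamma> :: "('a::{finite,field} ^ 3) set set set"
  assumes "projective_bundle \<Gamma>"
  shows "(\<exists>Ls Os. in_code \<Gamma> Ls Os \<and> (Ls, Os) \<noteq> ({}, {}) \<and> weight Ls Os = CARD('a) + 2)
    \<and> (\<forall>Ls Os. in_code \<Gamma> Ls Os \<and> (Ls, Os) \<noteq> ({}, {}) \<longrightarrow> weight Ls Os \<ge> CARD('a) + 2)
    \<and> (\<forall>Ls Os. in_code \<Gamma> Ls Os \<and> (Ls, Os) \<noteq> ({}, {}) \<and> weight Ls Os = CARD('a) + 2 \<longrightarrow>
         (odd (CARD('a)) \<longrightarrow>
            (\<exists>X \<in> \<Gamma>. Os = {X} \<and> Ls = {L \<in> pg_lines. tangent L X})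
          \<or> (\<exists>L \<in> pg_lines. Ls = {L} \<and> Os = {X \<in> \<Gamma>. tangent L X}))
       \<and> (even (CARD('a)) \<longrightarrow>
            (Os = {} \<and> dual_hyperoval Ls) \<or> (Ls = {} \<and> hyperoval_of_ovals \<Gamma> Os)))"
proof -
  interpret pg_bundle \<Gamma>
    using assms by unfold_locales
  have "\<forall>Ls Os. in_code \<Gamma> Ls Os \<and> (Ls, Os) \<noteq> ({}, {}) \<longrightarrow> weight Ls Os \<ge> CARD('a) + 2"
    using weight_lower_bound by blast
  moreover have "\<forall>Ls Os. in_code \<Gamma> Ls Os \<and> (Ls, Os) \<noteq> ({}, {}) \<and> weight Ls Os = CARD('a) + 2 \<longrightarrow>
      (odd CARD('a) \<longrightarrow> (\<exists>X\<in>\<Gamma>. Os = {X} \<and> Ls = {L\<in>pg_lines. tangent L X})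
                       \<or> (\<exists>L\<in>pg_lines. Ls = {L} \<and> Os = {X\<in>\<Gamma>. tangent L X}))
    \<and> (even CARD('a) \<longrightarrow> (Os = {} \<and> dual_hyperoval Ls) \<or> (Ls = {} \<and> hyperoval_of_ovals \<Gamma> Os))"
    by (intro allI impI, elim conjE, rule min_weight_in_code[THEN conjunct2]) simp_all
  ultimately show ?thesis
    by (rule conjI[OF ex_min_weight_in_code conjI])
qed

end
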